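(* Let $n\geq1$ and let $G$ be a classical generator of $\overline{\mathcal{C}}_n$. Then $G$ is homologically connected.
   Context: Let $k$ be a field, $S$ the unit circle with anticlockwise orientation. Fix a discrete infinite subset $\mathscr{M}\subset S$ such that every limit point of $\mathscr{M}$ is a limit of both an increasing and a decreasing sequence of $\mathscr{M}$ in the cyclic order, with exactly $n$ such limit points (accumulation points); put $\overline{\mathscr{M}}=\mathscr{M}\cup L(\mathscr{M})$. Each $x\in\mathscr{M}$ has a cyclic predecessor $x^-$ and successor $x^+$ in $\mathscr{M}$; for accumulation points $a^\pm=a$. An arc of $\overline{\mathscr{M}}$ is an unordered pair $\{x_1,x_2\}\subset\overline{\mathscr{M}}$ with $x_2\ne x_1,x_1^-,x_1^+$; arcs cross if their endpoints strictly alternate cyclically; $\{x_1,x_2\}[1]=\{x_1^-,x_2^-\}$. The Paquette–Yıldırım category $\overline{\mathcal{C}}_n$ is a Hom-finite, $k$-linear, Krull–Schmidt triangulated category with suspension $[1]$ whose indecomposables $X$ correspond bijectively to arcs $\ell_X$ of $\overline{\mathscr{M}}$, with $\ell_{X[1]}=\ell_X[1]$, and $\mathrm{Hom}(X,Y)\cong k$ if $\ell_X$ and $\ell_Y[-1]$ cross, or both have an endpoint at a common accumulation point with $\ell_Y[-1]$ an anticlockwise rotation of $\ell_X$ about it; $0$ otherwise. For an object $G$, $\langle G\rangle_1$ is the full subcategory of direct summands of finite direct sums of suspensions of $G$. $G$ is homologically connected if for any two indecomposables $F,F'\in\langle G\rangle_1$ there is a finite sequence $F=F_1,\dots,F_{l+1}=F'$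 of indecomposables in $\langle G\rangle_1$ such that for each $i$ there is a nonzero element of $\mathrm{Ext}^1(F_i,F_{i+1})$ or of $\mathrm{Ext}^1(F_{i+1},F_i)$. $G$ is a classical generator if the smallest thick subcategory containing $G$ is the whole category. *)

theory Defs
  imports "HOL-Analysis.Analysis"
begin

section \<open>The marked circle and its arcs\<close>

text \<open>The unit circle S is sphere 0 1 in the complex plane.  The anticlockwise angle
  from x to y (both on S) is Arg2pi (y / x), which lies in the interval [0, 2 pi).\<close>

definition ccw :: "complex \<Rightarrow> complex \<Rightarrow> real" where
  "ccw x y = Arg2pi (y / x)"

definition lim_pts :: "complex set \<Rightarrow> complex set" where
  "lim_pts M = {a. a islimpt M}"

definition Mbar :: "complex set \<Rightarrow> complex set" where
  "Mbar M = M \<union> lim_pts M"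

definition PY_marked :: "complex set \<Rightarrow> nat \<Rightarrow> bool" where
  "PY_marked M n \<longleftrightarrow>
     M \<subseteq> sphere 0 1 \<and> infinite M \<and>
     (\<forall>x\<in>M. \<exists>e>0. \<forall>y\<in>M. dist y x < e \<longrightarrow> y = x) \<and>
     finite (lim_pts M) \<and> card (lim_pts M) = n \<and>
     (\<forall>a\<in>lim_pts M. \<forall>e>0.
        (\<exists>y\<in>M. 0 < ccw a y \<and> ccw a y < e) \<and>
        (\<exists>y\<in>M. 0 < ccw y a \<and> ccw y a < e))"

definition succ_pt :: "complex set \<Rightarrow> complex \<Rightarrow> complex" where
  "succ_pt M x = (if x \<in> lim_pts M then x else
     (THE y. y \<in> Mbar M \<and> y \<noteq> x \<and> (\<forall>z\<in>Mbar M. z \<noteq> x \<longrightarrow> ccw x y \<le> ccw x z)))"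

definition pred_pt :: "complex set \<Rightarrow> complex \<Rightarrow> complex" where
  "pred_pt M x = (if x \<in> lim_pts M then x else
     (THE y. y \<in> Mbar M \<and> y \<noteq> x \<and> (\<forall>z\<in>Mbar M. z \<noteq> x \<longrightarrow> ccw y x \<le> ccw z x)))"

text \<open>Arcs are unordered pairs, represented as two-element sets.\<close>

definition is_arc :: "complex set \<Rightarrow> complex set \<Rightarrow> bool" where
  "is_arc M A \<longleftrightarrow> (\<exists>x1 x2. A = {x1, x2} \<and> x1 \<in> Mbar M \<and> x2 \<in> Mbar M \<and>
      x2 \<noteq> x1 \<and> x2 \<noteq> pred_pt M x1 \<and> x2 \<noteq> succ_pt M x1)"

definition arc_shift :: "complex set \<Rightarrow> complex set \<Rightarrow> complex set" where
  "arc_shift M A = pred_pt M ` A"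

definition arc_unshift :: "complex set \<Rightarrow> complex set \<Rightarrow> complex set" where
  "arc_unshift M A = succ_pt M ` A"

definition cyc_between :: "complex \<Rightarrow> complex \<Rightarrow> complex \<Rightarrow> bool" where
  "cyc_between x y z \<longleftrightarrow> 0 < ccw x y \<and> ccw x y < ccw x z"

definition arcs_cross :: "complex set \<Rightarrow> complex set \<Rightarrow> bool" where
  "arcs_cross A B \<longleftrightarrow> (\<exists>a b c d. A = {a, b} \<and> B = {c, d} \<and>
      cyc_between a c b \<and> cyc_between b d a)"

definition ccw_rotation :: "complex set \<Rightarrow> complex set \<Rightarrow> complex set \<Rightarrow> bool" where
  "ccw_rotation M A B \<longleftrightarrow> (\<exists>a x y. a \<in> lim_pts M \<and> A = {a, x} \<and> B = {a, y} \<and>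
      ccw x (succ_pt M x) \<le> ccw x y \<and> ccw x y < ccw x a)"

definition hom_cond :: "complex set \<Rightarrow> complex set \<Rightarrow> complex set \<Rightarrow> bool" where
  "hom_cond M A B \<longleftrightarrow> arcs_cross A B \<or> ccw_rotation M A B"

section \<open>k-linear triangulated categories\<close>

text \<open>Objects of type 'o, morphisms of type 'm, Hom X Y the set of morphisms X \<rightarrow> Y,
  comp g f the composite of f then g, scalars in the field 'k.\<close>

record ('o, 'm, 'k::field) tricat =
  Hom  :: "'o \<Rightarrow> 'o \<Rightarrow> 'm set"
  comp :: "'m \<Rightarrow> 'm \<Rightarrow> 'm"
  idm  :: "'o \<Rightarrow> 'm"
  zer  :: "'o \<Rightarrow> 'o \<Rightarrow> 'm"
  add  :: "'m \<Rightarrow> 'm \<Rightarrow> 'm"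
  sm   :: "'k \<Rightarrow> 'm \<Rightarrow> 'm"
  sh   :: "'o \<Rightarrow> 'o"
  shm  :: "'m \<Rightarrow> 'm"
  dtri :: "('o \<times> 'o \<times> 'o \<times> 'm \<times> 'm \<times> 'm) set"

definition is_iso :: "('o, 'm, 'k::field) tricat \<Rightarrow> 'o \<Rightarrow> 'o \<Rightarrow> 'm \<Rightarrow> bool" where
  "is_iso C X Y f \<longleftrightarrow> f \<in> Hom C X Y \<and>
     (\<exists>g\<in>Hom C Y X. comp C g f = idm C X \<and> comp C f g = idm C Y)"

definition isomorphic :: "('o, 'm, 'k::field) tricat \<Rightarrow> 'o \<Rightarrow> 'o \<Rightarrow> bool" where
  "isomorphic C X Y \<longleftrightarrow> (\<exists>f. is_iso C X Y f)"

definition zero_obj :: "('o, 'm, 'k::field) tricat \<Rightarrow> 'o \<Rightarrow> bool" where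
  "zero_obj C Z \<longleftrightarrow> (\<forall>X. Hom C Z X = {zer C Z X} \<and> Hom C X Z = {zer C X Z})"

definition is_biprod :: "('o, 'm, 'k::field) tricat \<Rightarrow> 'o \<Rightarrow> 'o \<Rightarrow> 'o \<Rightarrow> 'm \<Rightarrow> 'm \<Rightarrow> 'm \<Rightarrow> 'm \<Rightarrow> bool" where
  "is_biprod C X Y S i1 i2 p1 p2 \<longleftrightarrow>
     i1 \<in> Hom C X S \<and> i2 \<in> Hom C Y S \<and> p1 \<in> Hom C S X \<and> p2 \<in> Hom C S Y \<and>
     comp C p1 i1 = idm C X \<and> comp C p2 i2 = idm C Y \<and>
     comp C p1 i2 = zer C Y X \<and> comp C p2 i1 = zer C X Y \<and>
     add C (comp C i1 p1) (comp C i2 p2) = idm C S"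

definition biprod :: "('o, 'm, 'k::field) tricat \<Rightarrow> 'o \<Rightarrow> 'o \<Rightarrow> 'o \<Rightarrow> bool" where
  "biprod C X Y S \<longleftrightarrow> (\<exists>i1 i2 p1 p2. is_biprod C X Y S i1 i2 p1 p2)"

inductive dsum :: "('o, 'm, 'k::field) tricat \<Rightarrow> 'o list \<Rightarrow> 'o \<Rightarrow> bool" for C where
  dsum_Nil: "zero_obj C Z \<Longrightarrow> dsum C [] Z"
| dsum_Cons: "dsum C Xs S' \<Longrightarrow> biprod C X S' S \<Longrightarrow> dsum C (X # Xs) S"

definition indec :: "('o, 'm, 'k::field) tricat \<Rightarrow> 'o \<Rightarrow> bool" where
  "indec C X \<longleftrightarrow> \<not> zero_obj C X \<and>
     (\<forall>Y Z. biprod C Y Z X \<longrightarrow> zero_obj C Y \<or> zero_obj C Z)"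

definition local_end :: "('o, 'm, 'k::field) tricat \<Rightarrow> 'o \<Rightarrow> bool" where
  "local_end C X \<longleftrightarrow> \<not> zero_obj C X \<and>
     (\<forall>f\<in>Hom C X X. is_iso C X X f \<or> is_iso C X X (add C (idm C X) (sm C (-1) f)))"

definition lin_comb :: "('o, 'm, 'k::field) tricat \<Rightarrow> 'o \<Rightarrow> 'o \<Rightarrow> 'k list \<Rightarrow> 'm list \<Rightarrow> 'm" where
  "lin_comb C X Y cs fs = foldr (\<lambda>(c, f) acc. add C (sm C c f) acc) (zip cs fs) (zer C X Y)"

definition is_tri :: "('o, 'm, 'k::field) tricat \<Rightarrow> 'o \<times> 'o \<times> 'o \<times> 'm \<times> 'm \<times> 'm \<Rightarrow> bool" where
  "is_tri C T = (case T of (X, Y, Z, f, g, h) \<Rightarrow>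
     f \<in> Hom C X Y \<and> g \<in> Hom C Y Z \<and> h \<in> Hom C Z (sh C X))"

definition tri_mor :: "('o, 'm, 'k::field) tricat \<Rightarrow> 'o \<times> 'o \<times> 'o \<times> 'm \<times> 'm \<times> 'm \<Rightarrow>
    'o \<times> 'o \<times> 'o \<times> 'm \<times> 'm \<times> 'm \<Rightarrow> 'm \<Rightarrow> 'm \<Rightarrow> 'm \<Rightarrow> bool" where
  "tri_mor C T T' a b c = (case T of (X, Y, Z, f, g, h) \<Rightarrow> case T' of (X', Y', Z', f', g', h') \<Rightarrow>
     a \<in> Hom C X X' \<and> b \<in> Hom C Y Y' \<and> c \<in> Hom C Z Z' \<and>
     comp C b f = comp C f' a \<and> comp C c g = comp C g' b \<and>
     comp C (shm C a) h = comp C h' c)"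

definition klinear_additive :: "('o, 'm, 'k::field) tricat \<Rightarrow> bool" where
  "klinear_additive C \<longleftrightarrow>
    (\<forall>X Y. zer C X Y \<in> Hom C X Y) \<and>
    (\<forall>X. idm C X \<in> Hom C X X) \<and>
    (\<forall>X Y Z f g. f \<in> Hom C X Y \<longrightarrow> g \<in> Hom C Y Z \<longrightarrow> comp C g f \<in> Hom C X Z) \<and>
    (\<forall>X Y Z W f g h. f \<in> Hom C X Y \<longrightarrow> g \<in> Hom C Y Z \<longrightarrow> h \<in> Hom C Z W \<longrightarrow>
        comp C h (comp C g f) = comp C (comp C h g) f) \<and>
    (\<forall>X Y f. f \<in> Hom C X Y \<longrightarrow> comp C (idm C Y) f = f \<and> comp C f (idm C X) = f) \<and>
    \<comment> \<open>each Hom X Y is a k-vector space with zero zer X Y\<close>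
    (\<forall>X Y f g. f \<in> Hom C X Y \<longrightarrow> g \<in> Hom C X Y \<longrightarrow> add C f g \<in> Hom C X Y) \<and>
    (\<forall>X Y a f. f \<in> Hom C X Y \<longrightarrow> sm C a f \<in> Hom C X Y) \<and>
    (\<forall>X Y f g h. f \<in> Hom C X Y \<longrightarrow> g \<in> Hom C X Y \<longrightarrow> h \<in> Hom C X Y \<longrightarrow>
        add C (add C f g) h = add C f (add C g h)) \<and>
    (\<forall>X Y f g. f \<in> Hom C X Y \<longrightarrow> g \<in> Hom C X Y \<longrightarrow> add C f g = add C g f) \<and>
    (\<forall>X Y f. f \<in> Hom C X Y \<longrightarrow> add C f (zer C X Y) = f) \<and>
    (\<forall>X Y f. f \<in> Hom C X Y \<longrightarrow> sm C 0 f = zer C X Y \<and> sm C 1 f = f) \<and>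
    (\<forall>X Y a b f. f \<in> Hom C X Y \<longrightarrow> sm C (a + b) f = add C (sm C a f) (sm C b f)) \<and>
    (\<forall>X Y a b f. f \<in> Hom C X Y \<longrightarrow> sm C (a * b) f = sm C a (sm C b f)) \<and>
    (\<forall>X Y a f g. f \<in> Hom C X Y \<longrightarrow> g \<in> Hom C X Y \<longrightarrow>
        sm C a (add C f g) = add C (sm C a f) (sm C a g)) \<and>
    \<comment> \<open>composition is k-bilinear\<close>
    (\<forall>X Y Z f f' g. f \<in> Hom C X Y \<longrightarrow> f' \<in> Hom C X Y \<longrightarrow> g \<in> Hom C Y Z \<longrightarrow>
        comp C g (add C f f') = add C (comp C g f) (comp C g f')) \<and>
    (\<forall>X Y Z f g g'. f \<in> Hom C X Y \<longrightarrow> g \<in> Hom C Y Z \<longrightarrow> g' \<in> Hom C Y Z \<longrightarrow>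
        comp C (add C g g') f = add C (comp C g f) (comp C g' f)) \<and>
    (\<forall>X Y Z a f g. f \<in> Hom C X Y \<longrightarrow> g \<in> Hom C Y Z \<longrightarrow>
        comp C (sm C a g) f = sm C a (comp C g f) \<and> comp C g (sm C a f) = sm C a (comp C g f)) \<and>
    \<comment> \<open>additive: zero object and binary biproducts\<close>
    (\<exists>Z. zero_obj C Z) \<and>
    (\<forall>X Y. \<exists>S. biprod C X Y S) \<and>
    \<comment> \<open>Hom-finite\<close>
    (\<forall>X Y. \<exists>fs. set fs \<subseteq> Hom C X Y \<and>
        (\<forall>g\<in>Hom C X Y. \<exists>cs. length cs = length fs \<and> g = lin_comb C X Y cs fs))"

definition krull_schmidt :: "('o, 'm, 'k::field) tricat \<Rightarrow> bool" where
  "krull_schmidt C \<longleftrightarrow> (\<forall>X. \<exists>Xs. dsum C Xs X \<and> (\<forall>Y\<in>set Xs. local_end C Y))"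

definition triangulated :: "('o, 'm, 'k::field) tricat \<Rightarrow> bool" where
  "triangulated C \<longleftrightarrow>
    \<comment> \<open>the suspension is a k-linear autoequivalence\<close>
    (\<forall>X Y f. f \<in> Hom C X Y \<longrightarrow> shm C f \<in> Hom C (sh C X) (sh C Y)) \<and>
    (\<forall>X Y Z f g. f \<in> Hom C X Y \<longrightarrow> g \<in> Hom C Y Z \<longrightarrow>
        shm C (comp C g f) = comp C (shm C g) (shm C f)) \<and>
    (\<forall>X. shm C (idm C X) = idm C (sh C X)) \<and>
    (\<forall>X Y f g. f \<in> Hom C X Y \<longrightarrow> g \<in> Hom C X Y \<longrightarrow> shm C (add C f g) = add C (shm C f) (shm C g)) \<and>
    (\<forall>X Y a f. f \<in> Hom C X Y \<longrightarrow> shm C (sm C a f) = sm C a (shm C f)) \<and>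
    (\<forall>X Y. bij_betw (shm C) (Hom C X Y) (Hom C (sh C X) (sh C Y))) \<and>
    (\<forall>Y. \<exists>X. isomorphic C (sh C X) Y) \<and>
    \<comment> \<open>distinguished triangles\<close>
    (\<forall>T\<in>dtri C. is_tri C T) \<and>
    \<comment> \<open>TR1\<close>
    (\<forall>T T' a b c. T \<in> dtri C \<longrightarrow> is_tri C T' \<longrightarrow> tri_mor C T T' a b c \<longrightarrow>
        is_iso C (fst T) (fst T') a \<longrightarrow> is_iso C (fst (snd T)) (fst (snd T')) b \<longrightarrow>
        is_iso C (fst (snd (snd T))) (fst (snd (snd T'))) c \<longrightarrow> T' \<in> dtri C) \<and>
    (\<forall>X Z. zero_obj C Z \<longrightarrow> (X, X, Z, idm C X, zer C X Z, zer C Z (sh C X)) \<in> dtri C) \<and>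
    (\<forall>X Y f. f \<in> Hom C X Y \<longrightarrow> (\<exists>Z g h. (X, Y, Z, f, g, h) \<in> dtri C)) \<and>
    \<comment> \<open>TR2 (rotation)\<close>
    (\<forall>X Y Z f g h. (X, Y, Z, f, g, h) \<in> dtri C \<longrightarrow>
        (Y, Z, sh C X, g, h, sm C (-1) (shm C f)) \<in> dtri C) \<and>
    \<comment> \<open>TR3\<close>
    (\<forall>X Y Z f g h X' Y' Z' f' g' h' a b.
        (X, Y, Z, f, g, h) \<in> dtri C \<longrightarrow> (X', Y', Z', f', g', h') \<in> dtri C \<longrightarrow>
        a \<in> Hom C X X' \<longrightarrow> b \<in> Hom C Y Y' \<longrightarrow> comp C b f = comp C f' a \<longrightarrow>
        (\<exists>c. tri_mor C (X, Y, Z, f, g, h) (X', Y', Z', f', g', h') a b c)) \<and>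
    \<comment> \<open>TR4 (octahedral axiom)\<close>
    (\<forall>X Y Z Z' X' Y' f g f2 f3 g2 g3 h2 h3.
        (X, Y, Z', f, f2, f3) \<in> dtri C \<longrightarrow> (Y, Z, X', g, g2, g3) \<in> dtri C \<longrightarrow>
        (X, Z, Y', comp C g f, h2, h3) \<in> dtri C \<longrightarrow>
        (\<exists>u v. (Z', Y', X', u, v, comp C (shm C f2) g3) \<in> dtri C \<and>
           comp C u f2 = comp C h2 g \<and> comp C h3 u = f3 \<and>
           comp C v h2 = g2 \<and> comp C g3 v = comp C (shm C f) h3))"

section \<open>The Paquette--Yildirim category\<close>

definition hom_one_dim :: "('o, 'm, 'k::field) tricat \<Rightarrow> 'o \<Rightarrow> 'o \<Rightarrow> bool" where
  "hom_one_dim C X Y \<longleftrightarrow>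
     (\<exists>f\<in>Hom C X Y. f \<noteq> zer C X Y \<and> (\<forall>g\<in>Hom C X Y. \<exists>c. g = sm C c f))"

definition PY_category :: "complex set \<Rightarrow> ('o, 'm, 'k::field) tricat \<Rightarrow> ('o \<Rightarrow> complex set) \<Rightarrow> bool" where
  "PY_category M C arc_of \<longleftrightarrow>
     klinear_additive C \<and> krull_schmidt C \<and> triangulated C \<and>
     (\<forall>X. indec C X \<longrightarrow> is_arc M (arc_of X)) \<and>
     (\<forall>A. is_arc M A \<longrightarrow> (\<exists>X. indec C X \<and> arc_of X = A)) \<and>
     (\<forall>X Y. indec C X \<longrightarrow> indec C Y \<longrightarrow> (arc_of X = arc_of Y \<longleftrightarrow> isomorphic C X Y)) \<and>
     (\<forall>X. indec C X \<longrightarrow> arc_of (sh C X) = arc_shift M (arc_of X)) \<and>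
     (\<forall>X Y. indec C X \<longrightarrow> indec C Y \<longrightarrow>
        (if hom_cond M (arc_of X) (arc_unshift M (arc_of Y))
         then hom_one_dim C X Y else Hom C X Y = {zer C X Y}))"

section \<open>Thick subcategories, classical generators, homological connectedness\<close>

definition thick :: "('o, 'm, 'k::field) tricat \<Rightarrow> 'o set \<Rightarrow> bool" where
  "thick C T \<longleftrightarrow>
     (\<exists>Z\<in>T. zero_obj C Z) \<and>
     (\<forall>X Y. X \<in> T \<longrightarrow> isomorphic C X Y \<longrightarrow> Y \<in> T) \<and>
     (\<forall>X. X \<in> T \<longleftrightarrow> sh C X \<in> T) \<and>
     (\<forall>X Y Z f g h. (X, Y, Z, f, g, h) \<in> dtri C \<longrightarrow>
        (X \<in> T \<and> Y \<in> T \<longrightarrow> Z \<in> T) \<and> (Y \<in> T \<and> Z \<in> T \<longrightarrow> X \<in> T) \<and>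
        (X \<in> T \<and> Z \<in> T \<longrightarrow> Y \<in> T)) \<and>
     (\<forall>X Y S. biprod C X Y S \<longrightarrow> S \<in> T \<longrightarrow> X \<in> T)"

definition thick_closure :: "('o, 'm, 'k::field) tricat \<Rightarrow> 'o \<Rightarrow> 'o set" where
  "thick_closure C G = \<Inter>{T. thick C T \<and> G \<in> T}"

definition classical_generator :: "('o, 'm, 'k::field) tricat \<Rightarrow> 'o \<Rightarrow> bool" where
  "classical_generator C G \<longleftrightarrow> thick_closure C G = UNIV"

text \<open>Y is (isomorphic to) G[i] for some integer i.\<close>
definition is_suspension_of :: "('o, 'm, 'k::field) tricat \<Rightarrow> 'o \<Rightarrow> 'o \<Rightarrow> bool" where
  "is_suspension_of C G Y \<longleftrightarrow>
     (\<exists>i::nat. isomorphic C Y ((sh C ^^ i) G) \<or> isomorphic C ((sh C ^^ i) Y) G)"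

definition in_add1 :: "('o, 'm, 'k::field) tricat \<Rightarrow> 'o \<Rightarrow> 'o \<Rightarrow> bool" where
  "in_add1 C G F \<longleftrightarrow> (\<exists>Xs S F'. (\<forall>X\<in>set Xs. is_suspension_of C G X) \<and>
      dsum C Xs S \<and> biprod C F F' S)"

definition ext1_nonzero :: "('o, 'm, 'k::field) tricat \<Rightarrow> 'o \<Rightarrow> 'o \<Rightarrow> bool" where
  "ext1_nonzero C F F' \<longleftrightarrow> (\<exists>f\<in>Hom C F (sh C F'). f \<noteq> zer C F (sh C F'))"

definition homologically_connected :: "('o, 'm, 'k::field) tricat \<Rightarrow> 'o \<Rightarrow> bool" where
  "homologically_connected C G \<longleftrightarrow>
    (\<forall>F F'. indec C F \<longrightarrow> in_add1 C G F \<longrightarrow> indec C F' \<longrightarrow> in_add1 C G F' \<longrightarrow>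
      (\<exists>Fs. Fs \<noteq> [] \<and> hd Fs = F \<and> last Fs = F' \<and>
         (\<forall>X\<in>set Fs. indec C X \<and> in_add1 C G X) \<and>
         (\<forall>i. Suc i < length Fs \<longrightarrow>
            ext1_nonzero C (Fs ! i) (Fs ! Suc i) \<or> ext1_nonzero C (Fs ! Suc i) (Fs ! i))))"

end

theory Submission
  imports Defs
begin

text \<open>Suppose the indecomposable objects of \<langle>G\<rangle>_1 fall into two classes with no nonzero Ext^1
  between them.  Let P be the Ext-component of one of them and Q the rest.  The class A of objects
  Hom-orthogonal to all suspensions of Q and the class B of objects Hom-orthogonal to A are
  Hom-orthogonal to each other, closed under cones, suspensions, sums and retracts, and contain P
  and Q respectively.  The objects whose identity is a sum of an endomorphism factoring through A
  and one factoring through B form a thick subcategory containing G; as G is a classical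
  generator, every indecomposable object (having a local endomorphism ring) lies in A or in B.

  In the Paquette--Yildirim category this is impossible: call two arcs linked when there is a
  nonzero morphism in either direction between the corresponding indecomposables.  Every arc is
  linked to an arc with an endpoint at a fixed accumulation point a, and any two such arcs are
  linked by an anticlockwise rotation about a, so the graph of linked arcs is connected.  Hence
  all indecomposables would lie in A, and those in B would be orthogonal to themselves, i.e. zero.\<close>

section \<open>The cyclic order on the circle\<close>

lemma ccw_nonneg: "0 \<le> ccw x y"
  unfolding ccw_def by (rule Arg2pi_ge_0)

lemma ccw_less_2pi: "ccw x y < 2 * pi"
  unfolding ccw_def by (rule Arg2pi_lt_2pi)

lemma ccw_self [simp]: "ccw x x = 0"
  unfolding ccw_def by (cases "x = 0") (auto simp: Arg2pi_eq_0)

lemma ccw_eq_0_iff: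
  assumes "norm x = 1" "norm y = 1"
  shows "ccw x y = 0 \<longleftrightarrow> x = y"
proof
  assume "ccw x y = 0"
  then have "y / x \<in> \<real>" "0 \<le> Re (y / x)"
    unfolding ccw_def Arg2pi_eq_0 by auto
  then obtain r where r: "y / x = of_real r" "0 \<le> r"
    by (metis Reals_cases Re_complex_of_real)
  have "norm (y / x) = 1"
    using assms by (simp add: norm_divide)
  then have "r = 1"
    using r by simp
  then show "x = y"
    using r assms by (auto simp: divide_eq_eq split: if_splits)
qed simp

lemma ccw_pos: "norm x = 1 \<Longrightarrow> norm y = 1 \<Longrightarrow> x \<noteq> y \<Longrightarrow> 0 < ccw x y"
  using ccw_eq_0_iff ccw_nonneg by (metis less_eq_real_def)

lemma ccw_add:
  assumes "norm x = 1" "norm y = 1" "norm z = 1"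
  shows "ccw x z = (if ccw x y + ccw y z < 2 * pi then ccw x y + ccw y z
                    else ccw x y + ccw y z - 2 * pi)"
proof -
  have "x \<noteq> 0" "y \<noteq> 0" "z \<noteq> 0"
    using assms by auto
  moreover from this have "z / x = (y / x) * (z / y)"
    by (simp add: field_simps)
  ultimately show ?thesis
    unfolding ccw_def using Arg2pi_times[of "y / x" "z / y"] by simp
qed

text \<open>Every comparison of cyclic positions below is reduced to a comparison of the angles
  measured from a common base point b.\<close>

lemma ccw_rebase:
  assumes "norm b = 1" "norm y = 1" "norm z = 1"
  shows "ccw y z = (if ccw b y \<le> ccw b z then ccw b z - ccw b y else ccw b z - ccw b y + 2 * pi)"
  using ccw_add[OF assms] ccw_nonneg[of y z] ccw_less_2pi[of y z] ccw_nonneg[of b y]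
    ccw_less_2pi[of b y]
  by (auto split: if_splits)

lemma ccw_right_inj:
  assumes "norm x = 1" "norm y = 1" "norm z = 1" "ccw x y = ccw x z"
  shows "y = z"
proof -
  have "ccw y z = 0"
    using ccw_rebase[OF assms(1-3)] assms(4) by simp
  then show ?thesis
    using ccw_eq_0_iff assms by blast
qed

lemma ccw_swap:
  assumes "norm x = 1" "norm y = 1" "x \<noteq> y"
  shows "ccw y x = 2 * pi - ccw x y"
  using ccw_rebase[OF assms(1) assms(2) assms(1)] ccw_pos[OF assms] by simp

lemma ccw_left_inj:
  assumes "norm x = 1" "norm y = 1" "norm z = 1" "ccw y x = ccw z x"
  shows "y = z"
proof (cases "y = x \<or> z = x")
  case True
  then show ?thesis
    using assms ccw_eq_0_iff ccw_self by metis
next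
  case False
  then have "ccw x y = ccw x z"
    using ccw_swap assms by (metis add_diff_cancel_left' diff_add_cancel)
  then show ?thesis
    using ccw_right_inj assms by blast
qed

lemma isCont_ccw:
  assumes "norm x = 1" "norm y = 1" "y \<noteq> x"
  shows "isCont (ccw x) y"
proof -
  have "y / x \<notin> \<real>\<^sub>\<ge>\<^sub>0"
  proof
    assume "y / x \<in> \<real>\<^sub>\<ge>\<^sub>0"
    then have "ccw x y = 0"
      unfolding ccw_def complex_nonneg_Reals_iff Arg2pi_eq_0 complex_is_Real_iff by simp
    then show False
      using ccw_eq_0_iff assms by blast
  qed
  then have "isCont Arg2pi (y / x)"
    by (rule continuous_at_Arg2pi)
  moreover have "isCont (\<lambda>y. y / x) y"
    using assms by (intro continuous_intros) auto
  ultimately show ?thesis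
    unfolding ccw_def using continuous_at_compose[of y "\<lambda>y. y / x" Arg2pi] by (simp add: o_def)
qed

section \<open>The marked set and its successor function\<close>

lemma Mbar_eq_closure: "Mbar M = closure M"
  unfolding Mbar_def lim_pts_def closure_def ..

lemma marked_in_Mbar: "x \<in> M \<Longrightarrow> x \<in> Mbar M"
  unfolding Mbar_def by simp

lemma lim_pt_in_Mbar: "x \<in> lim_pts M \<Longrightarrow> x \<in> Mbar M"
  unfolding Mbar_def by simp

lemma Mbar_cases: "x \<in> Mbar M \<Longrightarrow> (x \<in> M \<Longrightarrow> P) \<Longrightarrow> (x \<in> lim_pts M \<Longrightarrow> P) \<Longrightarrow> P"
  unfolding Mbar_def by blast

lemma succ_pt_lim_pt [simp]: "a \<in> lim_pts M \<Longrightarrow> succ_pt M a = a"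
  unfolding succ_pt_def by simp

lemma pred_pt_lim_pt [simp]: "a \<in> lim_pts M \<Longrightarrow> pred_pt M a = a"
  unfolding pred_pt_def by simp

context
  fixes M :: "complex set" and n :: nat
  assumes marked: "PY_marked M n"
begin

lemma marked_infinite: "infinite M"
  using marked unfolding PY_marked_def by blast

lemma marked_isolated: "x \<in> M \<Longrightarrow> \<exists>e>0. \<forall>y\<in>M. dist y x < e \<longrightarrow> y = x"
  using marked unfolding PY_marked_def by blast

lemma lim_pts_approached_ccw: "a \<in> lim_pts M \<Longrightarrow> e > 0 \<Longrightarrow> \<exists>y\<in>M. 0 < ccw a y \<and> ccw a y < e"
  using marked unfolding PY_marked_def by blast

lemma lim_pts_approached_cw: "a \<in> lim_pts M \<Longrightarrow> e > 0 \<Longrightarrow> \<exists>y\<in>M. 0 < ccw y a \<and> ccw y a < e"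
  using marked unfolding PY_marked_def by blast

lemma lim_pts_nonempty: "n \<ge> 1 \<Longrightarrow> lim_pts M \<noteq> {}"
  using marked unfolding PY_marked_def by (metis card.empty not_one_le_zero)

lemma norm_Mbar: "x \<in> Mbar M \<Longrightarrow> norm x = 1"
proof -
  have "M \<subseteq> sphere 0 1"
    using marked unfolding PY_marked_def by blast
  then have "Mbar M \<subseteq> sphere 0 1"
    unfolding Mbar_eq_closure using closure_minimal[of M "sphere 0 1"] by simp
  then show "x \<in> Mbar M \<Longrightarrow> norm x = 1"
    by auto
qed

lemma marked_not_lim_pt:
  assumes x: "x \<in> M"
  shows "x \<notin> lim_pts M"
proof
  obtain e where e: "e > 0" "\<forall>y\<in>M. dist y x < e \<longrightarrow> y = x"
    using marked_isolated[OF x] by blast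
  assume "x \<in> lim_pts M"
  then obtain y where "y \<in> M" "y \<noteq> x" "dist y x < e"
    using e(1) unfolding lim_pts_def islimpt_approachable by blast
  then show False
    using e by blast
qed

lemma marked_isolated_in_Mbar:
  assumes x: "x \<in> M"
  shows "\<exists>e>0. \<forall>y\<in>Mbar M. dist y x < e \<longrightarrow> y = x"
proof -
  obtain e where e: "e > 0" "\<forall>y\<in>M. dist y x < e \<longrightarrow> y = x"
    using marked_isolated[OF x] by blast
  have "y = x" if y: "y \<in> Mbar M" "dist y x < e" for y
  proof (rule ccontr)
    assume yx: "y \<noteq> x"
    then have "y \<notin> M"
      using e y by blast
    then have "y islimpt M"
      using y unfolding Mbar_def lim_pts_def by simp
    moreover have "min (e - dist y x) (dist x y) > 0"
      using y yx by simp
    ultimately obtain m where m: "m \<in> M" "m \<noteq> y" "dist m y < min (e - dist y x) (dist x y)"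
      unfolding islimpt_approachable by blast
    then have "dist m x < e"
      using dist_triangle[of m x y] by simp
    then have "m = x"
      using e m by blast
    then show False
      using m by (simp add: dist_commute)
  qed
  then show ?thesis
    using e by blast
qed

text \<open>The successor of a marked point is the minimiser of the anticlockwise angle over the
  compact set of points of Mbar outside a small ball around it.\<close>

lemma succ_pt_exists:
  assumes x: "x \<in> M"
  shows "\<exists>s. s \<in> Mbar M \<and> s \<noteq> x \<and> (\<forall>z\<in>Mbar M. z \<noteq> x \<longrightarrow> ccw x s \<le> ccw x z)"
proof -
  obtain e where e: "e > 0" "\<forall>y\<in>Mbar M. dist y x < e \<longrightarrow> y = x"
    using marked_isolated_in_Mbar[OF x] by blast
  define K where "K = Mbar M - ball x e"
  have K: "z \<in> K \<longleftrightarrow> z \<in> Mbar M \<and> z \<noteq> x" for z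
    unfolding K_def using e by (auto simp: dist_commute)
  have "K \<subseteq> cball 0 1"
    using K norm_Mbar by auto
  moreover have "closed K"
    unfolding K_def Mbar_eq_closure by (intro closed_Diff) auto
  ultimately have cK: "compact K"
    using bounded_subset[OF bounded_cball] compact_eq_bounded_closed by blast
  have "infinite (M - {x})"
    using marked_infinite by simp
  then obtain y where "y \<in> M - {x}"
    by (metis ex_in_conv finite.emptyI)
  then have "K \<noteq> {}"
    using K marked_in_Mbar by blast
  moreover have "continuous_on K (ccw x)"
    using K isCont_ccw norm_Mbar marked_in_Mbar[OF x]
    by (intro continuous_at_imp_continuous_on) blast
  ultimately obtain s where "s \<in> K" "\<forall>z\<in>K. ccw x s \<le> ccw x z"
    using continuous_attains_inf[OF cK] by blast
  then show ?thesis
    using K by blast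
qed

lemma succ_pt_marked:
  assumes x: "x \<in> M"
  shows "succ_pt M x \<in> Mbar M" "succ_pt M x \<noteq> x"
    and "\<And>z. z \<in> Mbar M \<Longrightarrow> z \<noteq> x \<Longrightarrow> ccw x (succ_pt M x) \<le> ccw x z"
proof -
  let ?P = "\<lambda>y. y \<in> Mbar M \<and> y \<noteq> x \<and> (\<forall>z\<in>Mbar M. z \<noteq> x \<longrightarrow> ccw x y \<le> ccw x z)"
  obtain s where s: "?P s"
    using succ_pt_exists[OF x] by blast
  have unique: "y = s" if y: "?P y" for y
  proof -
    have "ccw x y \<le> ccw x s" "ccw x s \<le> ccw x y"
      using y s by blast+
    then have "ccw x y = ccw x s"
      by simp
    moreover have "norm x = 1" "norm y = 1" "norm s = 1"
      using norm_Mbar marked_in_Mbar[OF x] s y by auto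
    ultimately show ?thesis
      using ccw_right_inj by blast
  qed
  from s unique have "\<exists>!y. ?P y"
    by (rule ex1I)
  moreover have "succ_pt M x = (THE y. ?P y)"
    unfolding succ_pt_def using marked_not_lim_pt[OF x] by simp
  ultimately have "?P (succ_pt M x)"
    using theI'[of ?P] by simp
  then show "succ_pt M x \<in> Mbar M" "succ_pt M x \<noteq> x"
    and "\<And>z. z \<in> Mbar M \<Longrightarrow> z \<noteq> x \<Longrightarrow> ccw x (succ_pt M x) \<le> ccw x z"
    by auto
qed

lemma succ_pt_in_Mbar: "x \<in> Mbar M \<Longrightarrow> succ_pt M x \<in> Mbar M"
  by (erule Mbar_cases) (simp_all add: succ_pt_marked(1) lim_pt_in_Mbar)

text \<open>A limit point is approached from below, so it cannot be the successor of a marked point.\<close>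

lemma succ_pt_not_lim_pt:
  assumes x: "x \<in> M"
  shows "succ_pt M x \<notin> lim_pts M"
proof
  let ?a = "succ_pt M x"
  assume a: "?a \<in> lim_pts M"
  have norms: "norm x = 1" "norm ?a = 1"
    using norm_Mbar marked_in_Mbar[OF x] lim_pt_in_Mbar[OF a] by auto
  then have "ccw x ?a > 0"
    using ccw_pos succ_pt_marked(2)[OF x] by simp
  then obtain y where y: "y \<in> M" "0 < ccw y ?a" "ccw y ?a < ccw x ?a"
    using lim_pts_approached_cw[OF a] by blast
  have "norm y = 1"
    using norm_Mbar marked_in_Mbar[OF y(1)] by blast
  then have "ccw x y < ccw x ?a"
    using ccw_add[OF norms(1) _ norms(2), of y] y ccw_less_2pi[of x y] ccw_nonneg[of x y]
      ccw_less_2pi[of y ?a]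
    by (auto split: if_splits)
  moreover have "y \<noteq> x"
    using y by auto
  then have "ccw x ?a \<le> ccw x y"
    using succ_pt_marked(3)[OF x] marked_in_Mbar[OF y(1)] by blast
  ultimately show False
    by simp
qed

lemma pred_succ_pt:
  assumes x: "x \<in> M"
  shows "pred_pt M (succ_pt M x) = x"
proof -
  let ?s = "succ_pt M x"
  let ?P = "\<lambda>y. y \<in> Mbar M \<and> y \<noteq> ?s \<and> (\<forall>z\<in>Mbar M. z \<noteq> ?s \<longrightarrow> ccw y ?s \<le> ccw z ?s)"
  have xn: "norm x = 1" and sn: "norm ?s = 1"
    using norm_Mbar marked_in_Mbar[OF x] succ_pt_marked(1)[OF x] by auto
  have "ccw x ?s \<le> ccw z ?s" if z: "z \<in> Mbar M" "z \<noteq> ?s" for z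
  proof (rule ccontr)
    assume c: "\<not> ccw x ?s \<le> ccw z ?s"
    have "norm z = 1"
      using norm_Mbar z by blast
    moreover from this have "ccw z ?s \<noteq> 0"
      using ccw_eq_0_iff[OF _ sn] z(2) by blast
    ultimately have "ccw x z < ccw x ?s"
      using ccw_add[OF xn _ sn, of z] c ccw_less_2pi[of x z] ccw_nonneg[of z ?s]
        ccw_nonneg[of x z] ccw_less_2pi[of z ?s]
      by (auto split: if_splits)
    moreover have "z \<noteq> x"
      using c by auto
    ultimately show False
      using succ_pt_marked(3)[OF x z(1)] by simp
  qed
  then have Px: "?P x"
    using marked_in_Mbar[OF x] succ_pt_marked(2)[OF x] by auto
  have "y = x" if y: "?P y" for y
  proof -
    have "ccw y ?s \<le> ccw x ?s" "ccw x ?s \<le> ccw y ?s"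
      using y Px by blast+
    then have "ccw y ?s = ccw x ?s"
      by simp
    moreover have "norm y = 1"
      using norm_Mbar y by blast
    ultimately show ?thesis
      using ccw_left_inj[OF sn _ xn] by blast
  qed
  then have "(THE y. ?P y) = x"
    using Px by (rule the_equality[rotated])
  then show ?thesis
    unfolding pred_pt_def using succ_pt_not_lim_pt[OF x] by simp
qed

end

section \<open>Connectivity of the arc graph\<close>

lemma cyc_between_ordered:
  assumes "norm b = 1" "norm x = 1" "norm y = 1" "norm z = 1"
    and "ccw b x < ccw b y" "ccw b y < ccw b z"
  shows "cyc_between x y z"
  unfolding cyc_between_def
  using ccw_rebase[of b x y] ccw_rebase[of b x z] assms by simp

lemma cyc_between_rotate:
  assumes "norm x = 1" "norm y = 1" "norm z = 1" and "cyc_between x y z"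
  shows "cyc_between y z x"
  using assms ccw_rebase[of x y z] ccw_rebase[of x y x] ccw_less_2pi[of x z]
  unfolding cyc_between_def by simp

lemma arcs_cross_ordered:
  assumes norms: "norm b = 1" "norm p = 1" "norm q = 1" "norm r = 1" "norm t = 1"
    and "ccw b p < ccw b q" "ccw b q < ccw b r" "ccw b r < ccw b t"
  shows "arcs_cross {p, r} {q, t}" "arcs_cross {q, t} {p, r}"
proof -
  have pqr: "cyc_between p q r" and qrt: "cyc_between q r t"
    and prt: "cyc_between p r t" and pqt: "cyc_between p q t"
    using assms cyc_between_ordered[OF norms(1)] by (meson order.strict_trans)+
  have "cyc_between r t p"
    using cyc_between_rotate[OF norms(2,4,5) prt] .
  with pqr show "arcs_cross {p, r} {q, t}"
    unfolding arcs_cross_def by blast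
  have "cyc_between t p q"
    using cyc_between_rotate norms pqt by blast
  with qrt show "arcs_cross {q, t} {p, r}"
    unfolding arcs_cross_def by blast
qed

lemma arc_unshift_pair [simp]: "arc_unshift M {u, v} = {succ_pt M u, succ_pt M v}"
  unfolding arc_unshift_def by simp

text \<open>For indecomposables whose arcs are L and L', this says that there is a nonzero morphism
  between them in one of the two directions.\<close>

definition arcs_linked :: "complex set \<Rightarrow> complex set \<Rightarrow> complex set \<Rightarrow> bool" where
  "arcs_linked M L L' \<longleftrightarrow> hom_cond M L (arc_unshift M L') \<or> hom_cond M L' (arc_unshift M L)"

lemma arcs_linked_commute: "arcs_linked M L L' \<longleftrightarrow> arcs_linked M L' L"
  unfolding arcs_linked_def by blast

lemma fan_is_arc: "a \<in> lim_pts M \<Longrightarrow> z \<in> Mbar M \<Longrightarrow> z \<noteq> a \<Longrightarrow> is_arc M {a, z}"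
  unfolding is_arc_def using lim_pt_in_Mbar by (metis pred_pt_lim_pt succ_pt_lim_pt)

context
  fixes M :: "complex set" and n :: nat
  assumes marked: "PY_marked M n"
begin

lemma hom_cond_fan_rotation:
  assumes a: "a \<in> lim_pts M" and x: "x \<in> Mbar M" "x \<noteq> a" and y: "y \<in> Mbar M" "y \<noteq> a"
    and xy: "ccw a x < ccw a y"
  shows "hom_cond M {a, x} (arc_unshift M {a, y})"
proof -
  let ?s = "succ_pt M y"
  have norms: "norm a = 1" "norm x = 1" "norm y = 1" "norm ?s = 1"
    using norm_Mbar[OF marked] lim_pt_in_Mbar[OF a] x y succ_pt_in_Mbar[OF marked y(1)]
    by auto
  have ax: "0 < ccw a x"
    using ccw_pos norms x(2) by metis
  have "ccw a y \<le> ccw a ?s"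
  proof (cases rule: Mbar_cases[OF y(1)])
    case 1
    then have "?s \<noteq> a" "?s \<noteq> y"
      using succ_pt_not_lim_pt[OF marked] succ_pt_marked(2)[OF marked] a by auto
    moreover have "ccw y ?s \<le> ccw y a"
      using succ_pt_marked(3)[OF marked 1] lim_pt_in_Mbar[OF a] y(2) by blast
    ultimately have "cyc_between y ?s a"
      unfolding cyc_between_def using ccw_pos ccw_right_inj norms by (metis order_le_less)
    then have "cyc_between a y ?s"
      using cyc_between_rotate norms by blast
    then show ?thesis
      unfolding cyc_between_def by simp
  qed simp
  then have "cyc_between a x ?s"
    unfolding cyc_between_def using ax xy by simp
  then have "ccw x ?s < ccw x a"
    using cyc_between_rotate[of a x ?s] norms unfolding cyc_between_def by simp
  moreover have "ccw x (succ_pt M x) \<le> ccw x ?s"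
  proof (cases rule: Mbar_cases[OF x(1)])
    case 1
    moreover have "?s \<noteq> x"
      using \<open>cyc_between a x ?s\<close> unfolding cyc_between_def by auto
    ultimately show ?thesis
      using succ_pt_marked(3)[OF marked] succ_pt_in_Mbar[OF marked y(1)] by blast
  qed (simp add: ccw_nonneg)
  ultimately have "ccw_rotation M {a, x} {a, ?s}"
    unfolding ccw_rotation_def using a by blast
  then show ?thesis
    unfolding hom_cond_def using a by simp
qed

lemma arcs_linked_fan_marked_start:
  assumes a: "a \<in> lim_pts M" and u: "u \<in> M" and v: "v \<in> Mbar M" "v \<noteq> succ_pt M u"
    and uva: "cyc_between u v a"
  shows "arcs_linked M {u, v} {a, u}"
proof -
  let ?s = "succ_pt M u"
  have norms: "norm a = 1" "norm u = 1" "norm v = 1" "norm ?s = 1"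
    using norm_Mbar[OF marked] lim_pt_in_Mbar[OF a] marked_in_Mbar[OF u] v
      succ_pt_marked(1)[OF marked u] by auto
  have "v \<noteq> u"
    using uva unfolding cyc_between_def by auto
  then have "?s \<noteq> u" "ccw u ?s \<le> ccw u v"
    using succ_pt_marked(2,3)[OF marked u] v(1) by auto
  then have "0 < ccw u ?s" "ccw u ?s < ccw u v"
    using ccw_pos ccw_right_inj norms v(2) by (metis order_le_less)+
  then have "arcs_cross {u, v} {?s, a}"
    using arcs_cross_ordered(1)[of u u ?s v a] norms uva unfolding cyc_between_def by simp
  then show ?thesis
    unfolding arcs_linked_def hom_cond_def using a by (simp add: insert_commute)
qed

lemma arcs_linked_fan_marked_end:
  assumes a: "a \<in> lim_pts M" and u: "u \<in> lim_pts M" and v: "v \<in> M"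
    and vau: "cyc_between v a u"
  shows "arcs_linked M {u, v} {a, v}"
proof -
  let ?t = "succ_pt M v"
  have norms: "norm a = 1" "norm u = 1" "norm v = 1" "norm ?t = 1"
    using norm_Mbar[OF marked] lim_pt_in_Mbar[OF a] lim_pt_in_Mbar[OF u] marked_in_Mbar[OF v]
      succ_pt_marked(1)[OF marked v] by auto
  have "a \<noteq> v"
    using vau unfolding cyc_between_def by auto
  then have "?t \<noteq> v" "?t \<noteq> a" "ccw v ?t \<le> ccw v a"
    using succ_pt_marked(2,3)[OF marked v] succ_pt_not_lim_pt[OF marked v] a lim_pt_in_Mbar[OF a]
    by auto
  then have "0 < ccw v ?t" "ccw v ?t < ccw v a"
    using ccw_pos ccw_right_inj norms by (metis order_le_less)+
  then have "arcs_cross {v, a} {?t, u}"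
    using arcs_cross_ordered(1)[of v v ?t a u] norms vau unfolding cyc_between_def by simp
  then show ?thesis
    unfolding arcs_linked_def hom_cond_def using u by (simp add: insert_commute)
qed

lemma arcs_linked_fan_between:
  assumes a: "a \<in> lim_pts M" and u: "u \<in> lim_pts M" and v: "v \<in> lim_pts M"
    and uva: "cyc_between u v a"
  obtains m where "m \<in> M" "arcs_linked M {u, v} {a, m}"
proof -
  obtain m where m: "m \<in> M" "0 < ccw u m" "ccw u m < ccw u v"
    using lim_pts_approached_ccw[OF marked u] uva unfolding cyc_between_def by blast
  have "norm a = 1" "norm u = 1" "norm v = 1" "norm m = 1"
    using norm_Mbar[OF marked] lim_pt_in_Mbar[OF a] lim_pt_in_Mbar[OF u] lim_pt_in_Mbar[OF v]
      marked_in_Mbar[OF m(1)] by auto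
  then have "arcs_cross {m, a} {u, v}"
    using arcs_cross_ordered(2)[of u u m v a] m uva unfolding cyc_between_def by simp
  then have "arcs_linked M {u, v} {a, m}"
    unfolding arcs_linked_def hom_cond_def using u v by (simp add: insert_commute)
  with m(1) show ?thesis
    by (rule that)
qed

lemma arcs_linked_to_fan_ordered:
  assumes a: "a \<in> lim_pts M" and u: "u \<in> Mbar M" and v: "v \<in> Mbar M"
    and uv: "u \<noteq> v" "v \<noteq> succ_pt M u" and au: "a \<noteq> u" and av: "a \<noteq> v"
    and vau: "ccw v a < ccw v u"
  shows "\<exists>z\<in>Mbar M. z \<noteq> a \<and> arcs_linked M {u, v} {a, z}"
proof -
  have norms: "norm a = 1" "norm u = 1" "norm v = 1"
    using norm_Mbar[OF marked] lim_pt_in_Mbar[OF a] u v by auto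
  have vau': "cyc_between v a u"
    unfolding cyc_between_def using vau ccw_pos norms av by metis
  then have uva: "cyc_between u v a"
    using cyc_between_rotate norms by blast
  consider "u \<in> M" | "u \<in> lim_pts M" "v \<in> M" | "u \<in> lim_pts M" "v \<in> lim_pts M"
    using Mbar_cases u v by metis
  then show ?thesis
  proof cases
    case 1
    then show ?thesis
      using arcs_linked_fan_marked_start[OF a 1 v uv(2) uva] u au by (intro bexI[of _ u]) auto
  next
    case 2
    then show ?thesis
      using arcs_linked_fan_marked_end[OF a 2 vau'] v av by (intro bexI[of _ v]) auto
  next
    case 3
    then obtain m where "m \<in> M" "arcs_linked M {u, v} {a, m}"
      using arcs_linked_fan_between[OF a 3 uva] by blast
    moreover have "m \<noteq> a"
      using marked_not_lim_pt[OF marked \<open>m \<in> M\<close>] a by blast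
    ultimately show ?thesis
      using marked_in_Mbar by (intro bexI[of _ m]) auto
  qed
qed

lemma arc_linked_to_fan:
  assumes a: "a \<in> lim_pts M" and L: "is_arc M L"
  shows "\<exists>z\<in>Mbar M. z \<noteq> a \<and> (L = {a, z} \<or> arcs_linked M L {a, z})"
proof -
  obtain p q where pq: "L = {p, q}" "p \<in> Mbar M" "q \<in> Mbar M" "q \<noteq> p"
    "q \<noteq> pred_pt M p" "q \<noteq> succ_pt M p"
    using L unfolding is_arc_def by blast
  show ?thesis
  proof (cases "a \<in> {p, q}")
    case True
    then show ?thesis
      using pq by (auto simp: insert_commute)
  next
    case False
    have "p \<noteq> succ_pt M q"
      using pq(3-5) pred_succ_pt[OF marked] by (metis Mbar_cases succ_pt_lim_pt)
    have norms: "norm a = 1" "norm p = 1" "norm q = 1"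
      using norm_Mbar[OF marked] lim_pt_in_Mbar[OF a] pq(2,3) by auto
    consider "ccw q a < ccw q p" | "ccw q p < ccw q a"
      using ccw_right_inj[OF norms(3,1,2)] False by fastforce
    then show ?thesis
    proof cases
      case 1
      then show ?thesis
        using arcs_linked_to_fan_ordered[OF a pq(2,3) pq(4)[symmetric] pq(6)] False pq(1) by auto
    next
      case 2
      then have "cyc_between q p a"
        unfolding cyc_between_def using ccw_pos norms pq(4) by metis
      then have "ccw p a < ccw p q"
        using cyc_between_rotate norms unfolding cyc_between_def by blast
      then show ?thesis
        using arcs_linked_to_fan_ordered[OF a pq(3,2,4) \<open>p \<noteq> succ_pt M q\<close>] False pq(1)
        by (auto simp: insert_commute)
    qed
  qed
qed

text \<open>Every arc is linked to an arc of the fan at an accumulation point a, and any two arcs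
  of that fan are linked by a rotation about a.\<close>

lemma arc_graph_connected:
  assumes n: "n \<ge> 1"
    and closed: "\<And>L L'. is_arc M L' \<Longrightarrow> arcs_linked M L L' \<Longrightarrow> L \<in> S \<Longrightarrow> L' \<in> S"
    and L: "is_arc M L" and L': "is_arc M L'" and "L \<in> S"
  shows "L' \<in> S"
proof -
  obtain a where a: "a \<in> lim_pts M"
    using lim_pts_nonempty[OF marked n] by blast
  obtain x where x: "x \<in> Mbar M" "x \<noteq> a" "L = {a, x} \<or> arcs_linked M L {a, x}"
    using arc_linked_to_fan[OF a L] by blast
  obtain y where y: "y \<in> Mbar M" "y \<noteq> a" "L' = {a, y} \<or> arcs_linked M L' {a, y}"
    using arc_linked_to_fan[OF a L'] by blast
  have ax: "is_arc M {a, x}" and ay: "is_arc M {a, y}"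
    using fan_is_arc a x y by auto
  have "{a, x} \<in> S"
    using x(3) closed[OF ax] \<open>L \<in> S\<close> by blast
  moreover have "x = y \<or> arcs_linked M {a, x} {a, y}"
  proof -
    have "norm a = 1" "norm x = 1" "norm y = 1"
      using norm_Mbar[OF marked] lim_pt_in_Mbar[OF a] x y by auto
    then consider "x = y" | "ccw a x < ccw a y" | "ccw a y < ccw a x"
      using ccw_right_inj by (metis linorder_neqE_linordered_idom)
    then show ?thesis
      unfolding arcs_linked_def using hom_cond_fan_rotation a x y by cases blast+
  qed
  ultimately have "{a, y} \<in> S"
    using closed[OF ay] by blast
  then show ?thesis
    using y(3) closed[OF L'] arcs_linked_commute by blast
qed

end

section \<open>k-linear triangulated categories\<close>

locale klinear_triangulated =
  fixes C :: "('o, 'm, 'k::field) tricat"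
  assumes klinear: "klinear_additive C" and triang: "triangulated C"
begin

lemma klinear_additive_axioms:
  shows zer_in_ax: "\<forall>X Y. zer C X Y \<in> Hom C X Y"
    and id_in_ax: "\<forall>X. idm C X \<in> Hom C X X"
    and comp_in_ax: "\<forall>X Y Z f g. f \<in> Hom C X Y \<longrightarrow> g \<in> Hom C Y Z \<longrightarrow> comp C g f \<in> Hom C X Z"
    and comp_assoc_ax: "\<forall>X Y Z W f g h. f \<in> Hom C X Y \<longrightarrow> g \<in> Hom C Y Z \<longrightarrow> h \<in> Hom C Z W \<longrightarrow>
        comp C h (comp C g f) = comp C (comp C h g) f"
    and comp_id_ax: "\<forall>X Y f. f \<in> Hom C X Y \<longrightarrow> comp C (idm C Y) f = f \<and> comp C f (idm C X) = f"
    and add_in_ax: "\<forall>X Y f g. f \<in> Hom C X Y \<longrightarrow> g \<in> Hom C X Y \<longrightarrow> add C f g \<in> Hom C X Y"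
    and sm_in_ax: "\<forall>X Y a f. f \<in> Hom C X Y \<longrightarrow> sm C a f \<in> Hom C X Y"
    and add_assoc_ax: "\<forall>X Y f g h. f \<in> Hom C X Y \<longrightarrow> g \<in> Hom C X Y \<longrightarrow> h \<in> Hom C X Y \<longrightarrow>
        add C (add C f g) h = add C f (add C g h)"
    and add_comm_ax: "\<forall>X Y f g. f \<in> Hom C X Y \<longrightarrow> g \<in> Hom C X Y \<longrightarrow> add C f g = add C g f"
    and add_zer_ax: "\<forall>X Y f. f \<in> Hom C X Y \<longrightarrow> add C f (zer C X Y) = f"
    and sm_01_ax: "\<forall>X Y f. f \<in> Hom C X Y \<longrightarrow> sm C 0 f = zer C X Y \<and> sm C 1 f = f"
    and sm_plus_ax: "\<forall>X Y a b f. f \<in> Hom C X Y \<longrightarrow> sm C (a + b) f = add C (sm C a f) (sm C b f)"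
    and sm_mult_ax: "\<forall>X Y a b f. f \<in> Hom C X Y \<longrightarrow> sm C (a * b) f = sm C a (sm C b f)"
    and sm_add_ax: "\<forall>X Y a f g. f \<in> Hom C X Y \<longrightarrow> g \<in> Hom C X Y \<longrightarrow>
        sm C a (add C f g) = add C (sm C a f) (sm C a g)"
    and comp_add_right_ax: "\<forall>X Y Z f f' g. f \<in> Hom C X Y \<longrightarrow> f' \<in> Hom C X Y \<longrightarrow> g \<in> Hom C Y Z \<longrightarrow>
        comp C g (add C f f') = add C (comp C g f) (comp C g f')"
    and comp_add_left_ax: "\<forall>X Y Z f g g'. f \<in> Hom C X Y \<longrightarrow> g \<in> Hom C Y Z \<longrightarrow> g' \<in> Hom C Y Z \<longrightarrow>
        comp C (add C g g') f = add C (comp C g f) (comp C g' f)"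
    and comp_sm_ax: "\<forall>X Y Z a f g. f \<in> Hom C X Y \<longrightarrow> g \<in> Hom C Y Z \<longrightarrow>
        comp C (sm C a g) f = sm C a (comp C g f) \<and> comp C g (sm C a f) = sm C a (comp C g f)"
    and zero_obj_ex: "\<exists>Z. zero_obj C Z"
    and biprod_ex_ax: "\<forall>X Y. \<exists>S. biprod C X Y S"
  by (insert klinear, unfold klinear_additive_def, (elim conjE, assumption)+)

lemma triangulated_axioms:
  shows shm_in_ax: "\<forall>X Y f. f \<in> Hom C X Y \<longrightarrow> shm C f \<in> Hom C (sh C X) (sh C Y)"
    and shm_comp_ax: "\<forall>X Y Z f g. f \<in> Hom C X Y \<longrightarrow> g \<in> Hom C Y Z \<longrightarrow>
        shm C (comp C g f) = comp C (shm C g) (shm C f)"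
    and shm_id_ax: "\<forall>X. shm C (idm C X) = idm C (sh C X)"
    and shm_add_ax: "\<forall>X Y f g. f \<in> Hom C X Y \<longrightarrow> g \<in> Hom C X Y \<longrightarrow>
        shm C (add C f g) = add C (shm C f) (shm C g)"
    and shm_sm_ax: "\<forall>X Y a f. f \<in> Hom C X Y \<longrightarrow> shm C (sm C a f) = sm C a (shm C f)"
    and shm_bij_ax: "\<forall>X Y. bij_betw (shm C) (Hom C X Y) (Hom C (sh C X) (sh C Y))"
    and sh_ess_surj_ax: "\<forall>Y. \<exists>X. isomorphic C (sh C X) Y"
    and dtri_is_tri_ax: "\<forall>T\<in>dtri C. is_tri C T"
    and dtri_id_ax: "\<forall>X Z. zero_obj C Z \<longrightarrow> (X, X, Z, idm C X, zer C X Z, zer C Z (sh C X)) \<in> dtri C"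
    and dtri_ex_ax: "\<forall>X Y f. f \<in> Hom C X Y \<longrightarrow> (\<exists>Z g h. (X, Y, Z, f, g, h) \<in> dtri C)"
    and dtri_rot_ax: "\<forall>X Y Z f g h. (X, Y, Z, f, g, h) \<in> dtri C \<longrightarrow>
        (Y, Z, sh C X, g, h, sm C (-1) (shm C f)) \<in> dtri C"
    and dtri_mor_ax: "\<forall>X Y Z f g h X' Y' Z' f' g' h' a b.
        (X, Y, Z, f, g, h) \<in> dtri C \<longrightarrow> (X', Y', Z', f', g', h') \<in> dtri C \<longrightarrow>
        a \<in> Hom C X X' \<longrightarrow> b \<in> Hom C Y Y' \<longrightarrow> comp C b f = comp C f' a \<longrightarrow>
        (\<exists>c. tri_mor C (X, Y, Z, f, g, h) (X', Y', Z', f', g', h') a b c)"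
  by (insert triang, unfold triangulated_def, (elim conjE, assumption)+)

text \<open>Carrying the objects lets the simplifier discharge the Hom-membership side
  conditions of the rewrite rules below.\<close>

definition cmp :: "'o \<Rightarrow> 'o \<Rightarrow> 'o \<Rightarrow> 'm \<Rightarrow> 'm \<Rightarrow> 'm" where
  "cmp X Y Z g f = comp C g f"

definition ad :: "'o \<Rightarrow> 'o \<Rightarrow> 'm \<Rightarrow> 'm \<Rightarrow> 'm" where
  "ad X Y f g = add C f g"

definition sc :: "'o \<Rightarrow> 'o \<Rightarrow> 'k \<Rightarrow> 'm \<Rightarrow> 'm" where
  "sc X Y a f = sm C a f"

definition shf :: "'o \<Rightarrow> 'o \<Rightarrow> 'm \<Rightarrow> 'm" where
  "shf X Y f = shm C f"

lemma zer_in [simp, intro]: "zer C X Y \<in> Hom C X Y"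
  using zer_in_ax by blast

lemma id_in [simp, intro]: "idm C X \<in> Hom C X X"
  using id_in_ax by blast

lemma cmp_in [simp]: "f \<in> Hom C X Y \<Longrightarrow> g \<in> Hom C Y Z \<Longrightarrow> cmp X Y Z g f \<in> Hom C X Z"
  unfolding cmp_def using comp_in_ax by blast

lemma ad_in [simp]: "f \<in> Hom C X Y \<Longrightarrow> g \<in> Hom C X Y \<Longrightarrow> ad X Y f g \<in> Hom C X Y"
  unfolding ad_def using add_in_ax by blast

lemma sc_in [simp]: "f \<in> Hom C X Y \<Longrightarrow> sc X Y a f \<in> Hom C X Y"
  unfolding sc_def using sm_in_ax by blast

lemma cmp_assoc [simp]:
  "f \<in> Hom C X Y \<Longrightarrow> g \<in> Hom C Y Z \<Longrightarrow> h \<in> Hom C Z W \<Longrightarrow>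
   cmp X Y W (cmp Y Z W h g) f = cmp X Z W h (cmp X Y Z g f)"
  unfolding cmp_def using comp_assoc_ax by metis

lemma cmp_id_l [simp]: "f \<in> Hom C X Y \<Longrightarrow> cmp X Y Y (idm C Y) f = f"
  unfolding cmp_def using comp_id_ax by blast

lemma cmp_id_r [simp]: "f \<in> Hom C X Y \<Longrightarrow> cmp X X Y f (idm C X) = f"
  unfolding cmp_def using comp_id_ax by blast

lemma cmp_ad_r [simp]:
  "f \<in> Hom C X Y \<Longrightarrow> f' \<in> Hom C X Y \<Longrightarrow> g \<in> Hom C Y Z \<Longrightarrow>
   cmp X Y Z g (ad X Y f f') = ad X Z (cmp X Y Z g f) (cmp X Y Z g f')"
  unfolding cmp_def ad_def using comp_add_right_ax by blast

lemma cmp_ad_l [simp]: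
  "f \<in> Hom C X Y \<Longrightarrow> g \<in> Hom C Y Z \<Longrightarrow> g' \<in> Hom C Y Z \<Longrightarrow>
   cmp X Y Z (ad Y Z g g') f = ad X Z (cmp X Y Z g f) (cmp X Y Z g' f)"
  unfolding cmp_def ad_def using comp_add_left_ax by blast

lemma cmp_sc_l [simp]:
  "f \<in> Hom C X Y \<Longrightarrow> g \<in> Hom C Y Z \<Longrightarrow> cmp X Y Z (sc Y Z a g) f = sc X Z a (cmp X Y Z g f)"
  unfolding cmp_def sc_def using comp_sm_ax by blast

lemma cmp_sc_r [simp]:
  "f \<in> Hom C X Y \<Longrightarrow> g \<in> Hom C Y Z \<Longrightarrow> cmp X Y Z g (sc X Y a f) = sc X Z a (cmp X Y Z g f)"
  unfolding cmp_def sc_def using comp_sm_ax by blast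

lemma ad_zer_r [simp]: "f \<in> Hom C X Y \<Longrightarrow> ad X Y f (zer C X Y) = f"
  unfolding ad_def using add_zer_ax by blast

lemma ad_assoc [simp]:
  "f \<in> Hom C X Y \<Longrightarrow> g \<in> Hom C X Y \<Longrightarrow> h \<in> Hom C X Y \<Longrightarrow>
   ad X Y (ad X Y f g) h = ad X Y f (ad X Y g h)"
  unfolding ad_def using add_assoc_ax by blast

lemma ad_comm: "f \<in> Hom C X Y \<Longrightarrow> g \<in> Hom C X Y \<Longrightarrow> ad X Y f g = ad X Y g f"
  unfolding ad_def using add_comm_ax by blast

lemma sc_0 [simp]: "f \<in> Hom C X Y \<Longrightarrow> sc X Y 0 f = zer C X Y"
  unfolding sc_def using sm_01_ax by blast

lemma sc_1 [simp]: "f \<in> Hom C X Y \<Longrightarrow> sc X Y 1 f = f"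
  unfolding sc_def using sm_01_ax by blast

lemma sc_plus: "f \<in> Hom C X Y \<Longrightarrow> sc X Y (a + b) f = ad X Y (sc X Y a f) (sc X Y b f)"
  unfolding sc_def ad_def using sm_plus_ax by blast

lemma sc_sc [simp]: "f \<in> Hom C X Y \<Longrightarrow> sc X Y a (sc X Y b f) = sc X Y (a * b) f"
  unfolding sc_def using sm_mult_ax by metis

lemma sc_ad [simp]:
  "f \<in> Hom C X Y \<Longrightarrow> g \<in> Hom C X Y \<Longrightarrow>
   sc X Y a (ad X Y f g) = ad X Y (sc X Y a f) (sc X Y a g)"
  unfolding sc_def ad_def using sm_add_ax by blast

lemma ad_zer_l [simp]: "f \<in> Hom C X Y \<Longrightarrow> ad X Y (zer C X Y) f = f"
  using ad_comm ad_zer_r zer_in by metis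

lemma sc_zer [simp]: "sc X Y a (zer C X Y) = zer C X Y"
  by (metis mult_zero_right sc_0 sc_sc zer_in)

lemma cmp_zer_l [simp]: "f \<in> Hom C X Y \<Longrightarrow> cmp X Y Z (zer C Y Z) f = zer C X Z"
  by (metis cmp_sc_l sc_0 zer_in cmp_in)

lemma cmp_zer_r [simp]: "g \<in> Hom C Y Z \<Longrightarrow> cmp X Y Z g (zer C X Y) = zer C X Z"
  by (metis cmp_sc_r sc_0 zer_in cmp_in)

lemma ad_lcomm:
  "f \<in> Hom C X Y \<Longrightarrow> g \<in> Hom C X Y \<Longrightarrow> h \<in> Hom C X Y \<Longrightarrow>
   ad X Y f (ad X Y g h) = ad X Y g (ad X Y f h)"
  by (metis ad_assoc ad_comm)

lemma ad_neg [simp]: "f \<in> Hom C X Y \<Longrightarrow> ad X Y f (sc X Y (-1) f) = zer C X Y"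
  using sc_plus[of f X Y 1 "-1"] by simp

lemma ad_neg_left [simp]: "f \<in> Hom C X Y \<Longrightarrow> ad X Y (sc X Y (-1) f) f = zer C X Y"
  by (metis ad_comm ad_neg sc_in)

lemma ad_left_cancel [simp]:
  "f \<in> Hom C X Y \<Longrightarrow> g \<in> Hom C X Y \<Longrightarrow> ad X Y f (ad X Y (sc X Y (-1) f) g) = g"
  by (metis ad_assoc ad_neg ad_zer_l sc_in)

lemma ad_cancel [simp]:
  "e \<in> Hom C X Y \<Longrightarrow> f \<in> Hom C X Y \<Longrightarrow> ad X Y e (ad X Y f (sc X Y (-1) e)) = f"
  by (metis ad_assoc ad_comm ad_neg ad_zer_r sc_in)

lemma cmp_cancel:
  "cmp A B A r j = idm C A \<Longrightarrow> x \<in> Hom C X A \<Longrightarrow> j \<in> Hom C A B \<Longrightarrow> r \<in> Hom C B A \<Longrightarrow>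
   cmp X B A r (cmp X A B j x) = x"
  by (metis cmp_assoc cmp_id_l)

lemma cmp_reassoc:
  "cmp A B D r s = t \<Longrightarrow> x \<in> Hom C X A \<Longrightarrow> s \<in> Hom C A B \<Longrightarrow> r \<in> Hom C B D \<Longrightarrow>
   cmp X B D r (cmp X A B s x) = cmp X A D t x"
  by (metis cmp_assoc)

lemma shf_in [simp]: "f \<in> Hom C X Y \<Longrightarrow> shf X Y f \<in> Hom C (sh C X) (sh C Y)"
  unfolding shf_def using shm_in_ax by blast

lemma shf_cmp [simp]:
  "f \<in> Hom C X Y \<Longrightarrow> g \<in> Hom C Y Z \<Longrightarrow>
   shf X Z (cmp X Y Z g f) = cmp (sh C X) (sh C Y) (sh C Z) (shf Y Z g) (shf X Y f)"
  unfolding shf_def cmp_def using shm_comp_ax by blast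

lemma shf_id [simp]: "shf X X (idm C X) = idm C (sh C X)"
  unfolding shf_def using shm_id_ax by blast

lemma shf_ad [simp]:
  "f \<in> Hom C X Y \<Longrightarrow> g \<in> Hom C X Y \<Longrightarrow>
   shf X Y (ad X Y f g) = ad (sh C X) (sh C Y) (shf X Y f) (shf X Y g)"
  unfolding shf_def ad_def using shm_add_ax by blast

lemma shf_sc [simp]:
  "f \<in> Hom C X Y \<Longrightarrow> shf X Y (sc X Y a f) = sc (sh C X) (sh C Y) a (shf X Y f)"
  unfolding shf_def sc_def using shm_sm_ax by blast

lemma shf_zer [simp]: "shf X Y (zer C X Y) = zer C (sh C X) (sh C Y)"
  using shf_sc[of "zer C X Y" X Y 0] by simp

lemma shf_bij: "bij_betw (shf X Y) (Hom C X Y) (Hom C (sh C X) (sh C Y))"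
proof -
  have "bij_betw (shm C) (Hom C X Y) (Hom C (sh C X) (sh C Y))"
    using shm_bij_ax by blast
  then show ?thesis
    unfolding shf_def by (simp add: eta_contract_eq)
qed

lemma shf_inj: "f \<in> Hom C X Y \<Longrightarrow> g \<in> Hom C X Y \<Longrightarrow> shf X Y f = shf X Y g \<Longrightarrow> f = g"
  using shf_bij[of X Y] unfolding bij_betw_def inj_on_def by blast

lemma shf_surj: "g \<in> Hom C (sh C X) (sh C Y) \<Longrightarrow> \<exists>f\<in>Hom C X Y. g = shf X Y f"
  using shf_bij[of X Y] unfolding bij_betw_def by blast

lemma sh_ess_surj: "\<exists>X. isomorphic C (sh C X) Y"
  using sh_ess_surj_ax by blast

lemma is_iso_cmp:
  "is_iso C X Y f \<longleftrightarrow>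
   f \<in> Hom C X Y \<and> (\<exists>g\<in>Hom C Y X. cmp X Y X g f = idm C X \<and> cmp Y X Y f g = idm C Y)"
  unfolding is_iso_def cmp_def by blast

lemma is_iso_left_inverse:
  assumes "is_iso C X Y f"
  obtains g where "g \<in> Hom C Y X" "cmp X Y X g f = idm C X"
  using assms unfolding is_iso_cmp by blast

lemma is_iso_right_inverse:
  assumes "is_iso C X Y f"
  obtains g where "g \<in> Hom C Y X" "cmp Y X Y f g = idm C Y"
  using assms unfolding is_iso_cmp by blast

lemma isomorphic_refl: "isomorphic C X X"
  unfolding isomorphic_def is_iso_cmp
  by (intro exI[of _ "idm C X"] conjI bexI[of _ "idm C X"]) simp_all

lemma isomorphic_sym: "isomorphic C X Y \<Longrightarrow> isomorphic C Y X"
  unfolding isomorphic_def is_iso_cmp by blast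

lemma isomorphic_sh:
  assumes "isomorphic C X Y"
  shows "isomorphic C (sh C X) (sh C Y)"
proof -
  obtain f f' where "f \<in> Hom C X Y" "f' \<in> Hom C Y X"
    "cmp X Y X f' f = idm C X" "cmp Y X Y f f' = idm C Y"
    using assms unfolding isomorphic_def is_iso_cmp by blast
  then show ?thesis
    unfolding isomorphic_def is_iso_cmp
    by (intro exI[of _ "shf X Y f"] conjI bexI[of _ "shf Y X f'"]) (simp_all flip: shf_cmp)
qed

definition nonzero_hom :: "'o \<Rightarrow> 'o \<Rightarrow> bool" where
  "nonzero_hom X Y \<longleftrightarrow> (\<exists>f\<in>Hom C X Y. f \<noteq> zer C X Y)"

lemma hom_eq_zer: "\<not> nonzero_hom X Y \<Longrightarrow> f \<in> Hom C X Y \<Longrightarrow> f = zer C X Y"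
  unfolding nonzero_hom_def by blast

lemma nonzero_hom_iso:
  assumes "nonzero_hom X Y" and "isomorphic C X X'" and "isomorphic C Y Y'"
  shows "nonzero_hom X' Y'"
proof -
  obtain f where f: "f \<in> Hom C X Y" "f \<noteq> zer C X Y"
    using assms(1) unfolding nonzero_hom_def by blast
  obtain a a' where a: "a \<in> Hom C X X'" "a' \<in> Hom C X' X" "cmp X X' X a' a = idm C X"
    using assms(2) unfolding isomorphic_def is_iso_cmp by blast
  obtain b b' where b: "b \<in> Hom C Y Y'" "b' \<in> Hom C Y' Y" "cmp Y Y' Y b' b = idm C Y"
    using assms(3) unfolding isomorphic_def is_iso_cmp by blast
  let ?g = "cmp X' Y Y' b (cmp X' X Y f a')"
  have g: "cmp X X' Y (cmp X' Y' Y b' ?g) a = f"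
    using a b f by (simp add: cmp_cancel)
  have "?g \<noteq> zer C X' Y'"
  proof
    assume "?g = zer C X' Y'"
    with g have "f = cmp X X' Y (cmp X' Y' Y b' (zer C X' Y')) a"
      by simp
    then show False
      using f a b by simp
  qed
  moreover have "?g \<in> Hom C X' Y'"
    using a b f by simp
  ultimately show ?thesis
    unfolding nonzero_hom_def by blast
qed

lemma nonzero_hom_sh: "nonzero_hom (sh C X) (sh C Y) \<longleftrightarrow> nonzero_hom X Y"
proof
  assume "nonzero_hom (sh C X) (sh C Y)"
  then obtain g where g: "g \<in> Hom C (sh C X) (sh C Y)" "g \<noteq> zer C (sh C X) (sh C Y)"
    unfolding nonzero_hom_def by blast
  then obtain f where "f \<in> Hom C X Y" "g = shf X Y f"
    using shf_surj by blast
  then show "nonzero_hom X Y"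
    unfolding nonzero_hom_def using g by (metis shf_zer)
next
  assume "nonzero_hom X Y"
  then obtain f where f: "f \<in> Hom C X Y" "f \<noteq> zer C X Y"
    unfolding nonzero_hom_def by blast
  then have "shf X Y f \<noteq> zer C (sh C X) (sh C Y)"
    using shf_inj[of f X Y "zer C X Y"] by auto
  then show "nonzero_hom (sh C X) (sh C Y)"
    unfolding nonzero_hom_def using f by auto
qed

lemma zero_obj_iff: "zero_obj C Z \<longleftrightarrow> idm C Z = zer C Z Z"
proof
  assume "idm C Z = zer C Z Z"
  then have "f = zer C Z X" if "f \<in> Hom C Z X" for f X
    using cmp_id_r[OF that] that by simp
  moreover have "f = zer C X Z" if "f \<in> Hom C X Z" for f X
    using cmp_id_l[OF that] that \<open>idm C Z = zer C Z Z\<close> by simp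
  ultimately show "zero_obj C Z"
    unfolding zero_obj_def by blast
qed (auto simp: zero_obj_def)

lemma zero_obj_iff_no_endo: "zero_obj C X \<longleftrightarrow> \<not> nonzero_hom X X"
proof
  show "zero_obj C X \<Longrightarrow> \<not> nonzero_hom X X"
    unfolding zero_obj_def nonzero_hom_def by blast
  show "\<not> nonzero_hom X X \<Longrightarrow> zero_obj C X"
    unfolding zero_obj_iff using hom_eq_zer id_in by blast
qed

lemma zero_obj_iso: "zero_obj C Z \<Longrightarrow> isomorphic C Z Z' \<Longrightarrow> zero_obj C Z'"
  using zero_obj_iff_no_endo nonzero_hom_iso isomorphic_sym by metis

lemma zero_obj_sh: "zero_obj C (sh C X) \<longleftrightarrow> zero_obj C X"
  using zero_obj_iff_no_endo nonzero_hom_sh by metis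

lemma biprod_ex: "\<exists>S. biprod C X Y S"
  using biprod_ex_ax by blast

section \<open>Distinguished triangles\<close>

lemma dtri_in:
  "(X, Y, Z, f, g, h) \<in> dtri C \<Longrightarrow> f \<in> Hom C X Y \<and> g \<in> Hom C Y Z \<and> h \<in> Hom C Z (sh C X)"
  using dtri_is_tri_ax unfolding is_tri_def by fastforce

lemma dtri_id: "zero_obj C Z \<Longrightarrow> (X, X, Z, idm C X, zer C X Z, zer C Z (sh C X)) \<in> dtri C"
  using dtri_id_ax by blast

lemma dtri_ex: "f \<in> Hom C X Y \<Longrightarrow> \<exists>Z g h. (X, Y, Z, f, g, h) \<in> dtri C"
  using dtri_ex_ax by blast

lemma dtri_rot:
  "(X, Y, Z, f, g, h) \<in> dtri C \<Longrightarrow>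
   (Y, Z, sh C X, g, h, sc (sh C X) (sh C Y) (-1) (shf X Y f)) \<in> dtri C"
  unfolding sc_def shf_def using dtri_rot_ax by blast

lemma dtri_mor:
  assumes "(X, Y, Z, f, g, h) \<in> dtri C" "(X', Y', Z', f', g', h') \<in> dtri C"
    and "a \<in> Hom C X X'" "b \<in> Hom C Y Y'" "cmp X Y Y' b f = cmp X X' Y' f' a"
  shows "\<exists>c\<in>Hom C Z Z'. cmp Y Z Z' c g = cmp Y Y' Z' g' b \<and>
    cmp Z (sh C X) (sh C X') (shf X X' a) h = cmp Z Z' (sh C X') h' c"
proof -
  obtain c where "tri_mor C (X, Y, Z, f, g, h) (X', Y', Z', f', g', h') a b c"
    using assms dtri_mor_ax unfolding cmp_def by blast
  then show ?thesis
    unfolding tri_mor_def cmp_def shf_def by auto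
qed

text \<open>Compare the triangle with the rotated trivial triangle W \<rightarrow> 0 \<rightarrow> W[1] \<rightarrow> W[1]; the
  morphism c provided by TR3 is, up to sign and suspension, the required lift.\<close>

lemma dtri_lift:
  assumes T: "(P, Q, R, al, be, ga) \<in> dtri C" and u: "u \<in> Hom C W Q"
    and z: "cmp W Q R be u = zer C W R"
  shows "\<exists>v\<in>Hom C W P. u = cmp W P Q al v"
proof -
  obtain Z0 where "zero_obj C Z0"
    using zero_obj_ex by blast
  then have T0: "(W, Z0, sh C W, zer C W Z0, zer C Z0 (sh C W),
      sc (sh C W) (sh C W) (-1) (shf W W (idm C W))) \<in> dtri C"
    using dtri_rot[OF dtri_id] by simp
  have m: "al \<in> Hom C P Q" "be \<in> Hom C Q R" "ga \<in> Hom C R (sh C P)"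
    using dtri_in[OF T] by auto
  have "cmp W Z0 R (zer C Z0 R) (zer C W Z0) = cmp W Q R be u"
    using z by simp
  then obtain c where c: "c \<in> Hom C (sh C W) (sh C P)" and
    "cmp (sh C W) (sh C W) (sh C Q) (shf W Q u) (sc (sh C W) (sh C W) (-1) (shf W W (idm C W)))
       = cmp (sh C W) (sh C P) (sh C Q) (sc (sh C P) (sh C Q) (-1) (shf P Q al)) c"
    using dtri_mor[OF T0 dtri_rot[OF T] u zer_in] by blast
  then have "sc (sh C W) (sh C Q) (-1) (sc (sh C W) (sh C Q) (-1) (shf W Q u)) =
      sc (sh C W) (sh C Q) (-1)
        (sc (sh C W) (sh C Q) (-1) (cmp (sh C W) (sh C P) (sh C Q) (shf P Q al) c))"
    using u c m by simp
  then have shf_u: "shf W Q u = cmp (sh C W) (sh C P) (sh C Q) (shf P Q al) c"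
    using u c m by simp
  obtain v where v: "v \<in> Hom C W P" "c = shf W P v"
    using shf_surj c by blast
  have "shf W Q u = shf W Q (cmp W P Q al v)"
    using shf_u v m by simp
  then have "u = cmp W P Q al v"
    using shf_inj u v m by (meson cmp_in)
  then show ?thesis
    using v by blast
qed

text \<open>Dually, compare with the twice rotated trivial triangle 0 \<rightarrow> U[1] \<rightarrow> U[1] \<rightarrow> 0[1], where
  U[1] is isomorphic to W.\<close>

lemma dtri_extend:
  assumes T: "(P, Q, R, al, be, ga) \<in> dtri C" and u: "u \<in> Hom C Q W"
    and z: "cmp P Q W u al = zer C P W"
  shows "\<exists>v\<in>Hom C R W. u = cmp Q R W v be"
proof -
  obtain Z0 where "zero_obj C Z0"
    using zero_obj_ex by blast
  then have T2: "(Z0, sh C U, sh C U, zer C Z0 (sh C U),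
      sc (sh C U) (sh C U) (-1) (shf U U (idm C U)),
      sc (sh C U) (sh C Z0) (-1) (shf U Z0 (zer C U Z0))) \<in> dtri C" for U
    using dtri_rot[OF dtri_rot[OF dtri_id]] by simp
  obtain U ph ps where ph: "ph \<in> Hom C (sh C U) W" "ps \<in> Hom C W (sh C U)"
    "cmp W (sh C U) W ph ps = idm C W"
    using sh_ess_surj unfolding isomorphic_def is_iso_cmp by blast
  have m: "al \<in> Hom C P Q" "be \<in> Hom C Q R" "ga \<in> Hom C R (sh C P)"
    using dtri_in[OF T] by auto
  let ?b = "cmp Q W (sh C U) ps u"
  have b: "?b \<in> Hom C Q (sh C U)"
    using ph u by simp
  have "cmp P Q (sh C U) ?b al = cmp P Z0 (sh C U) (zer C Z0 (sh C U)) (zer C P Z0)"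
    using z ph u m by simp
  then obtain c where c: "c \<in> Hom C R (sh C U)" and
    "cmp Q R (sh C U) c be =
      cmp Q (sh C U) (sh C U) (sc (sh C U) (sh C U) (-1) (shf U U (idm C U))) ?b"
    using dtri_mor[OF T T2 zer_in b] by blast
  then have "cmp Q R (sh C U) c be = sc Q (sh C U) (-1) ?b"
    using ph u by simp
  then have "cmp Q R W (cmp R (sh C U) W ph (sc R (sh C U) (-1) c)) be = u"
    using ph u c m by (simp add: cmp_cancel)
  moreover have "cmp R (sh C U) W ph (sc R (sh C U) (-1) c) \<in> Hom C R W"
    using ph c by simp
  ultimately show ?thesis
    by metis
qed

text \<open>N = 1 - c kills g and h, so it factors through g on the right and through h on the left,
  whence N N = 0 and 1 + N is inverse to c.\<close>

lemma dtri_endo_iso: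
  assumes T: "(X, Y, Z, f, g, h) \<in> dtri C" and c: "c \<in> Hom C Z Z"
    and cg: "cmp Y Z Z c g = g" and hc: "cmp Z Z (sh C X) h c = h"
  shows "is_iso C Z Z c"
proof -
  have m: "f \<in> Hom C X Y" "g \<in> Hom C Y Z" "h \<in> Hom C Z (sh C X)"
    using dtri_in[OF T] by auto
  define N where "N = ad Z Z (idm C Z) (sc Z Z (-1) c)"
  have N: "N \<in> Hom C Z Z"
    unfolding N_def using c by simp
  have "cmp Z Z (sh C X) h N = zer C Z (sh C X)"
    unfolding N_def using c m hc by simp
  then obtain v where v: "v \<in> Hom C Z Y" "N = cmp Z Y Z g v"
    using dtri_lift[OF dtri_rot[OF T] N] by blast
  have Ng: "cmp Y Z Z N g = zer C Y Z"
    unfolding N_def using c m cg by simp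
  have "cmp Z Z Z N N = cmp Z Y Z (cmp Y Z Z N g) v"
    using N m v by simp
  then have NN: "cmp Z Z Z N N = zer C Z Z"
    using Ng v by simp
  have cN: "c = ad Z Z (idm C Z) (sc Z Z (-1) N)"
    unfolding N_def using c by simp
  have "cmp Z Z Z c (ad Z Z (idm C Z) N) = idm C Z" "cmp Z Z Z (ad Z Z (idm C Z) N) c = idm C Z"
    unfolding cN using N NN by simp_all
  then show ?thesis
    unfolding is_iso_cmp using c N by (intro conjI bexI[of _ "ad Z Z (idm C Z) N"]) simp_all
qed

lemma is_biprod_cmp:
  "is_biprod C X Y S i1 i2 p1 p2 \<longleftrightarrow>
     i1 \<in> Hom C X S \<and> i2 \<in> Hom C Y S \<and> p1 \<in> Hom C S X \<and> p2 \<in> Hom C S Y \<and>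
     cmp X S X p1 i1 = idm C X \<and> cmp Y S Y p2 i2 = idm C Y \<and>
     cmp Y S X p1 i2 = zer C Y X \<and> cmp X S Y p2 i1 = zer C X Y \<and>
     ad S S (cmp S X S i1 p1) (cmp S Y S i2 p2) = idm C S"
  unfolding is_biprod_def cmp_def ad_def by blast

section \<open>Biproducts\<close>

lemma biprod_cmp:
  "biprod C X Y S \<longleftrightarrow> (\<exists>i1 i2 p1 p2.
     i1 \<in> Hom C X S \<and> i2 \<in> Hom C Y S \<and> p1 \<in> Hom C S X \<and> p2 \<in> Hom C S Y \<and>
     cmp X S X p1 i1 = idm C X \<and> cmp Y S Y p2 i2 = idm C Y \<and>
     cmp Y S X p1 i2 = zer C Y X \<and> cmp X S Y p2 i1 = zer C X Y \<and>
     ad S S (cmp S X S i1 p1) (cmp S Y S i2 p2) = idm C S)"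
  unfolding biprod_def is_biprod_cmp by blast

lemma biprodI:
  assumes "iX \<in> Hom C X S" "iY \<in> Hom C Y S" "pX \<in> Hom C S X" "pY \<in> Hom C S Y"
    and "cmp X S X pX iX = idm C X" "cmp Y S Y pY iY = idm C Y"
    and "cmp Y S X pX iY = zer C Y X" "cmp X S Y pY iX = zer C X Y"
    and "ad S S (cmp S X S iX pX) (cmp S Y S iY pY) = idm C S"
  shows "biprod C X Y S"
  using assms unfolding biprod_cmp by blast

lemma biprodE:
  assumes "biprod C X Y S"
  obtains iX iY pX pY where "iX \<in> Hom C X S" "iY \<in> Hom C Y S" "pX \<in> Hom C S X" "pY \<in> Hom C S Y"
    "cmp X S X pX iX = idm C X" "cmp Y S Y pY iY = idm C Y"
    "cmp Y S X pX iY = zer C Y X" "cmp X S Y pY iX = zer C X Y"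
    "ad S S (cmp S X S iX pX) (cmp S Y S iY pY) = idm C S"
  using assms unfolding biprod_cmp by blast

lemma biprod_sym: "biprod C X Y S \<Longrightarrow> biprod C Y X S"
  unfolding biprod_cmp by (metis ad_comm cmp_in)

lemma biprod_zero_right: "zero_obj C Z \<Longrightarrow> biprod C X Z X"
  by (rule biprodI[where iX = "idm C X" and iY = "zer C Z X" and pX = "idm C X"
        and pY = "zer C X Z"])
    (simp_all add: zero_obj_iff)

lemma biprod_zero_iso:
  assumes "biprod C X Y S" and "zero_obj C Y"
  shows "isomorphic C X S"
proof -
  obtain iX iY pX pY where m: "iX \<in> Hom C X S" "iY \<in> Hom C Y S" "pX \<in> Hom C S X" "pY \<in> Hom C S Y"
    "cmp X S X pX iX = idm C X" and sum: "ad S S (cmp S X S iX pX) (cmp S Y S iY pY) = idm C S"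
    using assms(1) by (rule biprodE)
  have "iY = zer C Y S"
    using assms(2) m(2) unfolding zero_obj_def by blast
  then have "cmp S X S iX pX = idm C S"
    using m sum by simp
  then show ?thesis
    unfolding isomorphic_def is_iso_cmp using m by blast
qed

lemma biprod_iso_left:
  assumes "biprod C X Y S" and "isomorphic C X X'"
  shows "biprod C X' Y S"
proof -
  obtain iX iY pX pY where b: "iX \<in> Hom C X S" "iY \<in> Hom C Y S" "pX \<in> Hom C S X" "pY \<in> Hom C S Y"
    "cmp X S X pX iX = idm C X" "cmp Y S Y pY iY = idm C Y"
    "cmp Y S X pX iY = zer C Y X" "cmp X S Y pY iX = zer C X Y"
    "ad S S (cmp S X S iX pX) (cmp S Y S iY pY) = idm C S"
    using assms(1) by (rule biprodE)
  obtain ph ps where p: "ph \<in> Hom C X X'" "ps \<in> Hom C X' X"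
    "cmp X X' X ps ph = idm C X" "cmp X' X X' ph ps = idm C X'"
    using assms(2) unfolding isomorphic_def is_iso_cmp by blast
  show ?thesis
    by (rule biprodI[where iX = "cmp X' X S iX ps" and iY = iY and pX = "cmp S X X' ph pX"
          and pY = pY])
      (use b p in \<open>simp_all add: cmp_reassoc[OF b(5)] cmp_reassoc[OF b(8)] cmp_reassoc[OF p(3)]\<close>)
qed

lemma biprod_iso_sum:
  assumes "biprod C X Y S" and "isomorphic C S S'"
  shows "biprod C X Y S'"
proof -
  obtain iX iY pX pY where b: "iX \<in> Hom C X S" "iY \<in> Hom C Y S" "pX \<in> Hom C S X" "pY \<in> Hom C S Y"
    "cmp X S X pX iX = idm C X" "cmp Y S Y pY iY = idm C Y"
    "cmp Y S X pX iY = zer C Y X" "cmp X S Y pY iX = zer C X Y"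
    and sum: "ad S S (cmp S X S iX pX) (cmp S Y S iY pY) = idm C S"
    using assms(1) by (rule biprodE)
  obtain ph ps where p: "ph \<in> Hom C S S'" "ps \<in> Hom C S' S"
    "cmp S S' S ps ph = idm C S" "cmp S' S S' ph ps = idm C S'"
    using assms(2) unfolding isomorphic_def is_iso_cmp by blast
  have e: "ad S' S' (cmp S' X S' (cmp X S S' ph iX) (cmp S' S X pX ps))
      (cmp S' Y S' (cmp Y S S' ph iY) (cmp S' S Y pY ps))
     = cmp S' S S' ph (cmp S' S S (ad S S (cmp S X S iX pX) (cmp S Y S iY pY)) ps)"
    using b p by simp
  show ?thesis
    by (rule biprodI[where iX = "cmp X S S' ph iX" and iY = "cmp Y S S' ph iY"
          and pX = "cmp S' S X pX ps" and pY = "cmp S' S Y pY ps"])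
      (use b p sum e in \<open>simp_all add: cmp_reassoc[OF p(3)]\<close>)
qed

lemma biprod_sh:
  assumes "biprod C X Y S"
  shows "biprod C (sh C X) (sh C Y) (sh C S)"
proof -
  obtain iX iY pX pY where b: "iX \<in> Hom C X S" "iY \<in> Hom C Y S" "pX \<in> Hom C S X" "pY \<in> Hom C S Y"
    "cmp X S X pX iX = idm C X" "cmp Y S Y pY iY = idm C Y"
    "cmp Y S X pX iY = zer C Y X" "cmp X S Y pY iX = zer C X Y"
    "ad S S (cmp S X S iX pX) (cmp S Y S iY pY) = idm C S"
    using assms by (rule biprodE)
  show ?thesis
    by (rule biprodI[where iX = "shf X S iX" and iY = "shf Y S iY" and pX = "shf S X pX" and
          pY = "shf S Y pY"])
      (use b in \<open>simp_all flip: shf_cmp shf_ad\<close>)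
qed

lemma biprod_unsh:
  assumes "biprod C (sh C X) (sh C Y) (sh C S)"
  shows "biprod C X Y S"
proof -
  obtain jX jY qX qY where b: "jX \<in> Hom C (sh C X) (sh C S)" "jY \<in> Hom C (sh C Y) (sh C S)"
    "qX \<in> Hom C (sh C S) (sh C X)" "qY \<in> Hom C (sh C S) (sh C Y)"
    "cmp (sh C X) (sh C S) (sh C X) qX jX = idm C (sh C X)"
    "cmp (sh C Y) (sh C S) (sh C Y) qY jY = idm C (sh C Y)"
    "cmp (sh C Y) (sh C S) (sh C X) qX jY = zer C (sh C Y) (sh C X)"
    "cmp (sh C X) (sh C S) (sh C Y) qY jX = zer C (sh C X) (sh C Y)"
    "ad (sh C S) (sh C S) (cmp (sh C S) (sh C X) (sh C S) jX qX)
       (cmp (sh C S) (sh C Y) (sh C S) jY qY) = idm C (sh C S)"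
    using assms by (rule biprodE)
  obtain iX iY pX pY where m: "iX \<in> Hom C X S" "iY \<in> Hom C Y S" "pX \<in> Hom C S X" "pY \<in> Hom C S Y"
    and eqs: "jX = shf X S iX" "jY = shf Y S iY" "qX = shf S X pX" "qY = shf S Y pY"
    using shf_surj b(1-4) by metis
  show ?thesis
  proof (rule biprodI[OF m])
    show "cmp X S X pX iX = idm C X"
      using b(5) m shf_inj[of "cmp X S X pX iX" X X "idm C X"] by (simp add: eqs)
    show "cmp Y S Y pY iY = idm C Y"
      using b(6) m shf_inj[of "cmp Y S Y pY iY" Y Y "idm C Y"] by (simp add: eqs)
    show "cmp Y S X pX iY = zer C Y X"
      using b(7) m shf_inj[of "cmp Y S X pX iY" Y X "zer C Y X"] by (simp add: eqs)
    show "cmp X S Y pY iX = zer C X Y"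
      using b(8) m shf_inj[of "cmp X S Y pY iX" X Y "zer C X Y"] by (simp add: eqs)
    show "ad S S (cmp S X S iX pX) (cmp S Y S iY pY) = idm C S"
      using b(9) m shf_inj[of "ad S S (cmp S X S iX pX) (cmp S Y S iY pY)" S S "idm C S"]
      by (simp add: eqs)
  qed
qed

text \<open>The complement of W in S is W' \<oplus> X, where S = S' \<oplus> X and S' = W \<oplus> W'.\<close>

lemma biprod_summand_trans:
  assumes "biprod C W W' S'" and "biprod C S' X S"
  obtains W'' where "biprod C W W'' S"
proof -
  obtain i i' p p' where a: "i \<in> Hom C W S'" "i' \<in> Hom C W' S'" "p \<in> Hom C S' W" "p' \<in> Hom C S' W'"
    "cmp W S' W p i = idm C W" "cmp W' S' W' p' i' = idm C W'"
    "cmp W' S' W p i' = zer C W' W" "cmp W S' W' p' i = zer C W W'"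
    "ad S' S' (cmp S' W S' i p) (cmp S' W' S' i' p') = idm C S'"
    using assms(1) by (rule biprodE)
  obtain j jx r rx where c: "j \<in> Hom C S' S" "jx \<in> Hom C X S" "r \<in> Hom C S S'" "rx \<in> Hom C S X"
    "cmp S' S S' r j = idm C S'" "cmp X S X rx jx = idm C X"
    "cmp X S S' r jx = zer C X S'" "cmp S' S X rx j = zer C S' X"
    "ad S S (cmp S S' S j r) (cmp S X S jx rx) = idm C S"
    using assms(2) by (rule biprodE)
  obtain W'' where "biprod C W' X W''"
    using biprod_ex by blast
  then obtain m1 m2 n1 n2 where d: "m1 \<in> Hom C W' W''" "m2 \<in> Hom C X W''" "n1 \<in> Hom C W'' W'"
    "n2 \<in> Hom C W'' X" "cmp W' W'' W' n1 m1 = idm C W'" "cmp X W'' X n2 m2 = idm C X"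
    "cmp X W'' W' n1 m2 = zer C X W'" "cmp W' W'' X n2 m1 = zer C W' X"
    "ad W'' W'' (cmp W'' W' W'' m1 n1) (cmp W'' X W'' m2 n2) = idm C W''"
    by (rule biprodE)
  let ?I2 = "ad W'' S (cmp W'' S' S j (cmp W'' W' S' i' n1)) (cmp W'' X S jx n2)"
  let ?P2 = "ad S W'' (cmp S W' W'' m1 (cmp S S' W' p' r)) (cmp S X W'' m2 rx)"
  note simps = cmp_reassoc[OF a(5)] cmp_reassoc[OF a(6)] cmp_reassoc[OF a(7)] cmp_reassoc[OF a(8)]
    cmp_reassoc[OF c(5)] cmp_reassoc[OF c(6)] cmp_reassoc[OF c(7)] cmp_reassoc[OF c(8)]
    cmp_reassoc[OF d(5)] cmp_reassoc[OF d(6)] cmp_reassoc[OF d(7)] cmp_reassoc[OF d(8)]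
  have "ad S S (cmp S W S (cmp W S' S j i) (cmp S S' W p r)) (cmp S W'' S ?I2 ?P2) =
     ad S S (cmp S S' S j (cmp S S' S' (ad S' S' (cmp S' W S' i p) (cmp S' W' S' i' p')) r))
       (cmp S X S jx rx)"
    using a(1-8) c(1-8) d(1-8) by (simp add: simps ad_lcomm)
  also have "\<dots> = idm C S"
    unfolding a(9) using a c by simp
  finally have sum: "ad S S (cmp S W S (cmp W S' S j i) (cmp S S' W p r)) (cmp S W'' S ?I2 ?P2) =
    idm C S" .
  have "biprod C W W'' S"
    by (rule biprodI[where iX = "cmp W S' S j i" and iY = ?I2 and pX = "cmp S S' W p r"
          and pY = ?P2])
      (use a c d sum in \<open>simp_all add: simps flip: d(9)\<close>)
  then show ?thesis
    by (rule that)
qed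

section \<open>Local objects and direct sums\<close>

lemma local_end_sum_iso:
  assumes "local_end C X" and e: "e1 \<in> Hom C X X" "e2 \<in> Hom C X X"
    and sum: "ad X X e1 e2 = idm C X"
  shows "is_iso C X X e1 \<or> is_iso C X X e2"
proof -
  have "is_iso C X X e1 \<or> is_iso C X X (ad X X (idm C X) (sc X X (-1) e1))"
    using assms(1) e(1) unfolding local_end_def ad_def sc_def by blast
  moreover have "ad X X (idm C X) (sc X X (-1) e1) = ad X X (ad X X e1 e2) (sc X X (-1) e1)"
    unfolding sum ..
  then have "ad X X (idm C X) (sc X X (-1) e1) = e2"
    using e by (simp add: ad_comm ad_lcomm)
  ultimately show ?thesis
    by simp
qed

text \<open>If the idempotent i1 p1 of a summand U is invertible, then p2 = p2 (i1 p1) w factors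
  through p2 i1 = 0, so the complementary summand V is zero.\<close>

lemma local_indec:
  assumes "local_end C X"
  shows "indec C X"
proof -
  have "zero_obj C U \<or> zero_obj C V" if UV: "biprod C U V X" for U V
  proof -
    obtain i1 i2 p1 p2 where m: "i1 \<in> Hom C U X" "i2 \<in> Hom C V X" "p1 \<in> Hom C X U" "p2 \<in> Hom C X V"
      "cmp U X U p1 i1 = idm C U" "cmp V X V p2 i2 = idm C V"
      "cmp V X U p1 i2 = zer C V U" "cmp U X V p2 i1 = zer C U V"
      and sum: "ad X X (cmp X U X i1 p1) (cmp X V X i2 p2) = idm C X"
      using UV unfolding biprod_cmp by blast
    from local_end_sum_iso[OF assms _ _ sum] m(1-4)
    consider "is_iso C X X (cmp X U X i1 p1)" | "is_iso C X X (cmp X V X i2 p2)"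
      by auto
    then show ?thesis
    proof cases
      case 1
      then obtain w where w: "w \<in> Hom C X X" "cmp X X X (cmp X U X i1 p1) w = idm C X"
        by (rule is_iso_right_inverse)
      have "p2 = cmp X X V p2 (cmp X X X (cmp X U X i1 p1) w)"
        using w m by simp
      also have "\<dots> = zer C X V"
        using w(1) m by (simp add: cmp_reassoc[OF m(8)])
      finally have "idm C V = zer C V V"
        using m by simp
      then show ?thesis
        unfolding zero_obj_iff by blast
    next
      case 2
      then obtain w where w: "w \<in> Hom C X X" "cmp X X X (cmp X V X i2 p2) w = idm C X"
        by (rule is_iso_right_inverse)
      have "p1 = cmp X X U p1 (cmp X X X (cmp X V X i2 p2) w)"
        using w m by simp
      also have "\<dots> = zer C X U"
        using w(1) m by (simp add: cmp_reassoc[OF m(7)])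
      finally have "idm C U = zer C U U"
        using m by simp
      then show ?thesis
        unfolding zero_obj_iff by blast
    qed
  qed
  moreover have "\<not> zero_obj C X"
    using assms unfolding local_end_def by blast
  ultimately show ?thesis
    unfolding indec_def by blast
qed

lemma indec_local_iso:
  assumes "krull_schmidt C" and X: "indec C X"
  obtains L where "local_end C L" "isomorphic C L X"
proof -
  obtain Xs where d: "dsum C Xs X" and l: "\<forall>Y\<in>set Xs. local_end C Y"
    using assms(1) unfolding krull_schmidt_def by blast
  show ?thesis
  proof (cases Xs)
    case Nil
    then have "zero_obj C X"
      using d by (auto elim: dsum.cases)
    then show ?thesis
      using X unfolding indec_def by blast
  next
    case (Cons L Ls)
    then obtain S' where LS': "biprod C L S' X"
      using d by (auto elim: dsum.cases)
    have "local_end C L"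
      using l Cons by simp
    then have "zero_obj C S'"
      using X LS' unfolding indec_def local_end_def by blast
    then show ?thesis
      using that \<open>local_end C L\<close> biprod_zero_iso[OF LS'] by blast
  qed
qed

lemma dsum_member: "dsum C Ws S \<Longrightarrow> W \<in> set Ws \<Longrightarrow> \<exists>W'. biprod C W W' S"
proof (induction rule: dsum.induct)
  case (dsum_Cons Xs S' X S)
  show ?case
  proof (cases "W = X")
    case False
    then obtain W' where "biprod C W W' S'"
      using dsum_Cons by auto
    then show ?thesis
      using biprod_summand_trans biprod_sym[OF dsum_Cons(2)] by metis
  qed (use dsum_Cons in blast)
qed simp

lemma dsum_sh: "dsum C Xs S \<Longrightarrow> dsum C (map (sh C) Xs) (sh C S)"
proof (induction rule: dsum.induct)
  case (dsum_Nil Z)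
  then show ?case
    using zero_obj_sh by (simp add: dsum.dsum_Nil)
next
  case (dsum_Cons Xs S' X S)
  then show ?case
    using biprod_sh by (simp add: dsum.dsum_Cons)
qed

lemma indec_iso: "indec C X \<Longrightarrow> isomorphic C X Y \<Longrightarrow> indec C Y"
  unfolding indec_def using zero_obj_iso isomorphic_sym biprod_iso_sum by metis

lemma indec_sh:
  assumes X: "indec C X"
  shows "indec C (sh C X)"
proof -
  have "zero_obj C U \<or> zero_obj C V" if UV: "biprod C U V (sh C X)" for U V
  proof -
    obtain U' V' where U': "isomorphic C (sh C U') U" and V': "isomorphic C (sh C V') V"
      using sh_ess_surj by metis
    have "biprod C (sh C V') (sh C U') (sh C X)"
      using biprod_iso_left[OF biprod_sym[OF biprod_iso_left[OF UV isomorphic_sym[OF U']]]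
          isomorphic_sym[OF V']] .
    then have "zero_obj C V' \<or> zero_obj C U'"
      using X biprod_unsh unfolding indec_def by blast
    then show ?thesis
      using zero_obj_sh zero_obj_iso U' V' by blast
  qed
  moreover have "\<not> zero_obj C (sh C X)"
    using X zero_obj_sh unfolding indec_def by blast
  ultimately show ?thesis
    unfolding indec_def by blast
qed

lemma is_suspension_of_sh:
  assumes "is_suspension_of C G Y"
  shows "is_suspension_of C G (sh C Y)"
proof -
  obtain i where "isomorphic C Y ((sh C ^^ i) G) \<or> isomorphic C ((sh C ^^ i) Y) G"
    using assms unfolding is_suspension_of_def by blast
  then show ?thesis
  proof
    assume "isomorphic C Y ((sh C ^^ i) G)"
    then have "isomorphic C (sh C Y) ((sh C ^^ Suc i) G)"
      using isomorphic_sh by simp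
    then show ?thesis
      unfolding is_suspension_of_def by blast
  next
    assume iso: "isomorphic C ((sh C ^^ i) Y) G"
    show ?thesis
    proof (cases i)
      case 0
      then have "isomorphic C (sh C Y) ((sh C ^^ 1) G)"
        using iso isomorphic_sh by simp
      then show ?thesis
        unfolding is_suspension_of_def by blast
    next
      case (Suc j)
      then have "isomorphic C ((sh C ^^ j) (sh C Y)) G"
        using iso by (simp add: funpow_Suc_right del: funpow.simps)
      then show ?thesis
        unfolding is_suspension_of_def by blast
    qed
  qed
qed

lemma in_add1_sh:
  assumes "in_add1 C G F"
  shows "in_add1 C G (sh C F)"
proof -
  obtain Xs S F' where "\<forall>X\<in>set Xs. is_suspension_of C G X" "dsum C Xs S" "biprod C F F' S"
    using assms unfolding in_add1_def by blast
  then have "\<forall>X\<in>set (map (sh C) Xs). is_suspension_of C G X" "dsum C (map (sh C) Xs) (sh C S)"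
    "biprod C (sh C F) (sh C F') (sh C S)"
    using is_suspension_of_sh dsum_sh biprod_sh by auto
  then show ?thesis
    unfolding in_add1_def by blast
qed

lemma in_add1_iso: "in_add1 C G F \<Longrightarrow> isomorphic C F F' \<Longrightarrow> in_add1 C G F'"
  unfolding in_add1_def using biprod_iso_left by blast

lemma in_add1_summand:
  assumes "biprod C W W' G"
  shows "in_add1 C G W"
proof -
  obtain Z where "zero_obj C Z"
    using zero_obj_ex by blast
  then have "dsum C [G] G"
    using dsum.dsum_Cons[OF dsum.dsum_Nil biprod_zero_right] by blast
  moreover have "is_suspension_of C G G"
    unfolding is_suspension_of_def using isomorphic_refl by (metis funpow_0)
  ultimately show ?thesis
    unfolding in_add1_def using assms by (intro exI[of _ "[G]"] exI[of _ G] exI[of _ W']) simp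
qed

section \<open>Hom-orthogonal classes\<close>

definition orth :: "'o set \<Rightarrow> 'o set" where
  "orth A = {X. \<forall>Y\<in>A. \<not> nonzero_hom X Y \<and> \<not> nonzero_hom Y X}"

definition shift_stable :: "'o set \<Rightarrow> bool" where
  "shift_stable A \<longleftrightarrow> (\<forall>Y\<in>A. sh C Y \<in> A) \<and> (\<forall>Y\<in>A. \<exists>Y'\<in>A. isomorphic C (sh C Y') Y)"

lemma orth_iso:
  assumes "X \<in> orth A" and "isomorphic C X X'"
  shows "X' \<in> orth A"
proof -
  have "isomorphic C X' X"
    using assms(2) by (rule isomorphic_sym)
  then show ?thesis
    using assms(1) nonzero_hom_iso[OF _ _ isomorphic_refl] nonzero_hom_iso[OF _ isomorphic_refl]
    unfolding orth_def by blast
qed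

lemma orth_zero: "zero_obj C Z \<Longrightarrow> Z \<in> orth A"
  unfolding orth_def zero_obj_def nonzero_hom_def by blast

lemma orth_sh:
  assumes st: "shift_stable A"
  shows "sh C X \<in> orth A \<longleftrightarrow> X \<in> orth A"
proof
  assume sX: "sh C X \<in> orth A"
  show "X \<in> orth A"
    unfolding orth_def
  proof (intro CollectI ballI)
    fix Y assume "Y \<in> A"
    then have "sh C Y \<in> A"
      using st unfolding shift_stable_def by blast
    then have "\<not> nonzero_hom (sh C X) (sh C Y) \<and> \<not> nonzero_hom (sh C Y) (sh C X)"
      using sX unfolding orth_def by blast
    then show "\<not> nonzero_hom X Y \<and> \<not> nonzero_hom Y X"
      unfolding nonzero_hom_sh .
  qed
next
  assume X: "X \<in> orth A"
  show "sh C X \<in> orth A"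
    unfolding orth_def
  proof (intro CollectI ballI)
    fix Y assume "Y \<in> A"
    then obtain Y' where Y': "Y' \<in> A" "isomorphic C Y (sh C Y')"
      using st isomorphic_sym unfolding shift_stable_def by blast
    then have "\<not> nonzero_hom X Y' \<and> \<not> nonzero_hom Y' X"
      using X unfolding orth_def by blast
    then have "\<not> nonzero_hom (sh C X) (sh C Y') \<and> \<not> nonzero_hom (sh C Y') (sh C X)"
      unfolding nonzero_hom_sh .
    then show "\<not> nonzero_hom (sh C X) Y \<and> \<not> nonzero_hom Y (sh C X)"
      using nonzero_hom_iso[OF _ isomorphic_refl Y'(2)] nonzero_hom_iso[OF _ Y'(2) isomorphic_refl]
      by blast
  qed
qed

lemma orth_shift_stable:
  assumes st: "shift_stable A"
  shows "shift_stable (orth A)"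
  unfolding shift_stable_def
proof (intro conjI ballI)
  show "sh C Y \<in> orth A" if "Y \<in> orth A" for Y
    using orth_sh[OF st] that by simp
  fix Y assume Y: "Y \<in> orth A"
  obtain Y' where Y': "isomorphic C (sh C Y') Y"
    using sh_ess_surj by blast
  then have "Y' \<in> orth A"
    using orth_iso[OF Y] isomorphic_sym orth_sh[OF st] by blast
  with Y' show "\<exists>Y'\<in>orth A. isomorphic C (sh C Y') Y"
    by blast
qed

text \<open>A morphism Z \<rightarrow> W (resp. W \<rightarrow> Z) into the orthogonal class is killed by g (resp. h), hence
  extends along h (resp. lifts along g) to a morphism from X[1] (resp. into Y), which vanishes.\<close>

lemma orth_cone:
  assumes st: "shift_stable A" and T: "(X, Y, Z, f, g, h) \<in> dtri C"
    and X: "X \<in> orth A" and Y: "Y \<in> orth A"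
  shows "Z \<in> orth A"
  unfolding orth_def
proof (intro CollectI ballI conjI notI)
  fix W assume W: "W \<in> A"
  have m: "f \<in> Hom C X Y" "g \<in> Hom C Y Z" "h \<in> Hom C Z (sh C X)"
    using dtri_in[OF T] by auto
  have sX: "sh C X \<in> orth A"
    using orth_sh[OF st] X by simp
  note T' = dtri_rot[OF T]
  {
    assume "nonzero_hom Z W"
    then obtain u where u: "u \<in> Hom C Z W" "u \<noteq> zer C Z W"
      unfolding nonzero_hom_def by blast
    have "\<not> nonzero_hom Y W"
      using Y W unfolding orth_def by blast
    then have "cmp Y Z W u g = zer C Y W"
      using hom_eq_zer[of Y W "cmp Y Z W u g"] u m by simp
    then obtain v where v: "v \<in> Hom C (sh C X) W" "u = cmp Z (sh C X) W v h"
      using dtri_extend[OF T' u(1)] by blast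
    have "v = zer C (sh C X) W"
      using sX W v hom_eq_zer unfolding orth_def by blast
    then show False
      using u v m by simp
  next
    assume "nonzero_hom W Z"
    then obtain u where u: "u \<in> Hom C W Z" "u \<noteq> zer C W Z"
      unfolding nonzero_hom_def by blast
    have "\<not> nonzero_hom W (sh C X)"
      using sX W unfolding orth_def by blast
    then have "cmp W Z (sh C X) h u = zer C W (sh C X)"
      using hom_eq_zer[of W "sh C X" "cmp W Z (sh C X) h u"] u m by simp
    then obtain v where v: "v \<in> Hom C W Y" "u = cmp W Y Z g v"
      using dtri_lift[OF T' u(1)] by blast
    have "v = zer C W Y"
      using Y W v hom_eq_zer unfolding orth_def by blast
    then show False
      using u v m by simp
  }
qed

lemma orth_retract:
  assumes S: "S \<in> orth A" and i: "i \<in> Hom C X S" and p: "p \<in> Hom C S X"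
    and pi: "cmp X S X p i = idm C X"
  shows "X \<in> orth A"
  unfolding orth_def
proof (intro CollectI ballI conjI notI)
  fix W assume W: "W \<in> A"
  {
    assume "nonzero_hom X W"
    then obtain u where u: "u \<in> Hom C X W" "u \<noteq> zer C X W"
      unfolding nonzero_hom_def by blast
    have "\<not> nonzero_hom S W"
      using S W unfolding orth_def by blast
    then have "cmp S X W u p = zer C S W"
      using hom_eq_zer u p by simp
    then have "cmp X S W (cmp S X W u p) i = zer C X W"
      using i by simp
    then show False
      using u i p pi by simp
  next
    assume "nonzero_hom W X"
    then obtain u where u: "u \<in> Hom C W X" "u \<noteq> zer C W X"
      unfolding nonzero_hom_def by blast
    have "\<not> nonzero_hom W S"
      using S W unfolding orth_def by blast
    then have "cmp W X S i u = zer C W S"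
      using hom_eq_zer u i by simp
    then have "cmp W S X p (cmp W X S i u) = zer C W X"
      using p by simp
    then show False
      using u i p by (simp add: cmp_reassoc[OF pi])
  }
qed

lemma orth_biprod:
  assumes "biprod C X Y S" and X: "X \<in> orth A" and Y: "Y \<in> orth A"
  shows "S \<in> orth A"
  unfolding orth_def
proof (intro CollectI ballI conjI notI)
  fix W assume W: "W \<in> A"
  obtain i1 i2 p1 p2 where m: "i1 \<in> Hom C X S" "i2 \<in> Hom C Y S" "p1 \<in> Hom C S X" "p2 \<in> Hom C S Y"
    and sum: "ad S S (cmp S X S i1 p1) (cmp S Y S i2 p2) = idm C S"
    using assms(1) unfolding biprod_cmp by blast
  {
    assume "nonzero_hom S W"
    then obtain u where u: "u \<in> Hom C S W" "u \<noteq> zer C S W"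
      unfolding nonzero_hom_def by blast
    have "\<not> nonzero_hom X W" "\<not> nonzero_hom Y W"
      using X Y W unfolding orth_def by blast+
    then have "cmp X S W u i1 = zer C X W" "cmp Y S W u i2 = zer C Y W"
      using hom_eq_zer[of X W "cmp X S W u i1"] hom_eq_zer[of Y W "cmp Y S W u i2"] u m by simp_all
    then have "cmp S S W u (ad S S (cmp S X S i1 p1) (cmp S Y S i2 p2)) = zer C S W"
      using m u by (simp add: cmp_reassoc)
    then show False
      using u sum by simp
  next
    assume "nonzero_hom W S"
    then obtain u where u: "u \<in> Hom C W S" "u \<noteq> zer C W S"
      unfolding nonzero_hom_def by blast
    have "\<not> nonzero_hom W X" "\<not> nonzero_hom W Y"
      using X Y W unfolding orth_def by blast+
    then have "cmp W S X p1 u = zer C W X" "cmp W S Y p2 u = zer C W Y"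
      using hom_eq_zer[of W X "cmp W S X p1 u"] hom_eq_zer[of W Y "cmp W S Y p2 u"] u m by simp_all
    then have "cmp W S S (ad S S (cmp S X S i1 p1) (cmp S Y S i2 p2)) u = zer C W S"
      using m u by simp
    then show False
      using u sum by simp
  }
qed

section \<open>Objects split between two orthogonal classes\<close>

definition saturated_class :: "'o set \<Rightarrow> bool" where
  "saturated_class A \<longleftrightarrow>
     (\<forall>Z. zero_obj C Z \<longrightarrow> Z \<in> A) \<and>
     (\<forall>X X'. X \<in> A \<longrightarrow> isomorphic C X X' \<longrightarrow> X' \<in> A) \<and>
     (\<forall>X. sh C X \<in> A \<longleftrightarrow> X \<in> A) \<and>
     (\<forall>X Y Z f g h. (X, Y, Z, f, g, h) \<in> dtri C \<longrightarrow> X \<in> A \<longrightarrow> Y \<in> A \<longrightarrow> Z \<in> A) \<and>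
     (\<forall>X Y S. biprod C X Y S \<longrightarrow> X \<in> A \<longrightarrow> Y \<in> A \<longrightarrow> S \<in> A) \<and>
     (\<forall>X S i p. S \<in> A \<longrightarrow> i \<in> Hom C X S \<longrightarrow> p \<in> Hom C S X \<longrightarrow> cmp X S X p i = idm C X \<longrightarrow> X \<in> A)"

lemma orth_saturated_class:
  assumes "shift_stable Q"
  shows "saturated_class (orth Q)"
proof -
  have "\<forall>Z. zero_obj C Z \<longrightarrow> Z \<in> orth Q"
    using orth_zero by blast
  moreover have "\<forall>X X'. X \<in> orth Q \<longrightarrow> isomorphic C X X' \<longrightarrow> X' \<in> orth Q"
    using orth_iso by blast
  moreover have "\<forall>X. sh C X \<in> orth Q \<longleftrightarrow> X \<in> orth Q"
    using orth_sh[OF assms] by blast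
  moreover have "\<forall>X Y Z f g h. (X, Y, Z, f, g, h) \<in> dtri C \<longrightarrow> X \<in> orth Q \<longrightarrow> Y \<in> orth Q \<longrightarrow>
      Z \<in> orth Q"
    using orth_cone[OF assms] by blast
  moreover have "\<forall>X Y S. biprod C X Y S \<longrightarrow> X \<in> orth Q \<longrightarrow> Y \<in> orth Q \<longrightarrow> S \<in> orth Q"
    using orth_biprod by blast
  moreover have "\<forall>X S i p. S \<in> orth Q \<longrightarrow> i \<in> Hom C X S \<longrightarrow> p \<in> Hom C S X \<longrightarrow>
      cmp X S X p i = idm C X \<longrightarrow> X \<in> orth Q"
    using orth_retract by blast
  ultimately show ?thesis
    unfolding saturated_class_def by (intro conjI)
qed

text \<open>For Hom-orthogonal saturated classes A and B the following objects form a thick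
  subcategory; a classical generator lying in it therefore forces every object, and hence every
  local object, into A or B.\<close>

definition decomposable :: "'o set \<Rightarrow> 'o set \<Rightarrow> 'o set" where
  "decomposable A B = {X. \<exists>Z1 Z2 a1 b1 a2 b2. Z1 \<in> A \<and> Z2 \<in> B \<and>
     b1 \<in> Hom C X Z1 \<and> a1 \<in> Hom C Z1 X \<and> b2 \<in> Hom C X Z2 \<and> a2 \<in> Hom C Z2 X \<and>
     ad X X (cmp X Z1 X a1 b1) (cmp X Z2 X a2 b2) = idm C X}"

lemma decomposableI:
  assumes "ad X X (cmp X Z1 X a1 b1) (cmp X Z2 X a2 b2) = idm C X"
    and "Z1 \<in> A" "Z2 \<in> B" "b1 \<in> Hom C X Z1" "a1 \<in> Hom C Z1 X" "b2 \<in> Hom C X Z2" "a2 \<in> Hom C Z2 X"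
  shows "X \<in> decomposable A B"
  using assms unfolding decomposable_def by blast

lemma decomposableE:
  assumes "X \<in> decomposable A B"
  obtains Z1 Z2 a1 b1 a2 b2 where "Z1 \<in> A" "Z2 \<in> B"
    "b1 \<in> Hom C X Z1" "a1 \<in> Hom C Z1 X" "b2 \<in> Hom C X Z2" "a2 \<in> Hom C Z2 X"
    "ad X X (cmp X Z1 X a1 b1) (cmp X Z2 X a2 b2) = idm C X"
  using assms unfolding decomposable_def by blast

lemma idm_split_source:
  assumes sum: "ad X X (cmp X X1 X a1 b1) (cmp X X2 X a2 b2) = idm C X"
    and m: "b1 \<in> Hom C X X1" "a1 \<in> Hom C X1 X" "b2 \<in> Hom C X X2" "a2 \<in> Hom C X2 X"
    and k: "k \<in> Hom C X W" and vanish: "cmp X2 X W k a2 = zer C X2 W"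
  shows "k = cmp X X1 W (cmp X1 X W k a1) b1"
proof -
  have "k = cmp X X W k (ad X X (cmp X X1 X a1 b1) (cmp X X2 X a2 b2))"
    using k by (simp add: sum)
  also have "\<dots> = cmp X X1 W (cmp X1 X W k a1) b1"
    using m k by (simp add: cmp_reassoc[OF vanish])
  finally show ?thesis .
qed

lemma idm_split_target:
  assumes sum: "ad Y Y (cmp Y Y1 Y a1 b1) (cmp Y Y2 Y a2 b2) = idm C Y"
    and m: "b1 \<in> Hom C Y Y1" "a1 \<in> Hom C Y1 Y" "b2 \<in> Hom C Y Y2" "a2 \<in> Hom C Y2 Y"
    and k: "k \<in> Hom C V Y" and vanish: "cmp V Y Y2 b2 k = zer C V Y2"
  shows "k = cmp V Y1 Y a1 (cmp V Y Y1 b1 k)"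
proof -
  have "k = cmp V Y Y (ad Y Y (cmp Y Y1 Y a1 b1) (cmp Y Y2 Y a2 b2)) k"
    using k by (simp add: sum)
  also have "\<dots> = cmp V Y1 Y a1 (cmp V Y Y1 b1 k)"
    using m k vanish by simp
  finally show ?thesis .
qed

lemma diagonal_component_squares:
  assumes sx: "ad X X (cmp X X1 X ax1 bx1) (cmp X X2 X ax2 bx2) = idm C X"
    and sy: "ad Y Y (cmp Y Y1 Y ay1 by1) (cmp Y Y2 Y ay2 by2) = idm C Y"
    and mx: "bx1 \<in> Hom C X X1" "ax1 \<in> Hom C X1 X" "bx2 \<in> Hom C X X2" "ax2 \<in> Hom C X2 X"
    and my: "by1 \<in> Hom C Y Y1" "ay1 \<in> Hom C Y1 Y" "by2 \<in> Hom C Y Y2" "ay2 \<in> Hom C Y2 Y"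
    and f: "f \<in> Hom C X Y"
    and vanish: "cmp X2 Y Y1 by1 (cmp X2 X Y f ax2) = zer C X2 Y1"
      "cmp X1 Y Y2 by2 (cmp X1 X Y f ax1) = zer C X1 Y2"
  shows "cmp X Y Y1 by1 f = cmp X X1 Y1 (cmp X1 Y Y1 by1 (cmp X1 X Y f ax1)) bx1"
    and "cmp X1 Y1 Y ay1 (cmp X1 Y Y1 by1 (cmp X1 X Y f ax1)) = cmp X1 X Y f ax1"
proof -
  show "cmp X Y Y1 by1 f = cmp X X1 Y1 (cmp X1 Y Y1 by1 (cmp X1 X Y f ax1)) bx1"
    using idm_split_source[OF sx mx, of "cmp X Y Y1 by1 f" Y1] vanish f mx my by simp
  show "cmp X1 Y1 Y ay1 (cmp X1 Y Y1 by1 (cmp X1 X Y f ax1)) = cmp X1 X Y f ax1"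
    using idm_split_target[OF sy my, of "cmp X1 X Y f ax1" X1] vanish f mx my by simp
qed

lemma dtri_mor_pair:
  assumes T: "(X, Y, Z, f, g, h) \<in> dtri C" and T': "(X', Y', Z', f', g', h') \<in> dtri C"
    and a: "a \<in> Hom C X X'" "a' \<in> Hom C X' X" and b: "b \<in> Hom C Y Y'" "b' \<in> Hom C Y' Y"
    and sq: "cmp X Y Y' b f = cmp X X' Y' f' a" and sq': "cmp X' Y' Y b' f' = cmp X' X Y f a'"
  obtains c d where "c \<in> Hom C Z Z'" "d \<in> Hom C Z' Z"
    "cmp Y Z Z' c g = cmp Y Y' Z' g' b"
    "cmp Z (sh C X) (sh C X') (shf X X' a) h = cmp Z Z' (sh C X') h' c"
    "cmp Y' Z' Z d g' = cmp Y' Y Z g b'"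
    "cmp Z' (sh C X') (sh C X) (shf X' X a') h' = cmp Z' Z (sh C X) h d"
  using dtri_mor[OF T T' a(1) b(1) sq] dtri_mor[OF T' T a(2) b(2) sq'] by blast

context
  fixes A B :: "'o set"
  assumes satA: "saturated_class A" and satB: "saturated_class B"
    and orthAB: "\<forall>a\<in>A. \<forall>b\<in>B. \<not> nonzero_hom a b \<and> \<not> nonzero_hom b a"
begin

lemma A_zero: "zero_obj C Z \<Longrightarrow> Z \<in> A"
  using satA unfolding saturated_class_def by blast

lemma B_zero: "zero_obj C Z \<Longrightarrow> Z \<in> B"
  using satB unfolding saturated_class_def by blast

lemma A_iso: "X \<in> A \<Longrightarrow> isomorphic C X X' \<Longrightarrow> X' \<in> A"
  using satA unfolding saturated_class_def by blast

lemma B_iso: "X \<in> B \<Longrightarrow> isomorphic C X X' \<Longrightarrow> X' \<in> B"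
  using satB unfolding saturated_class_def by blast

lemma A_sh: "sh C X \<in> A \<longleftrightarrow> X \<in> A"
  using satA unfolding saturated_class_def by blast

lemma B_sh: "sh C X \<in> B \<longleftrightarrow> X \<in> B"
  using satB unfolding saturated_class_def by blast

lemma A_cone: "(X, Y, Z, f, g, h) \<in> dtri C \<Longrightarrow> X \<in> A \<Longrightarrow> Y \<in> A \<Longrightarrow> Z \<in> A"
  using satA unfolding saturated_class_def by blast

lemma B_cone: "(X, Y, Z, f, g, h) \<in> dtri C \<Longrightarrow> X \<in> B \<Longrightarrow> Y \<in> B \<Longrightarrow> Z \<in> B"
  using satB unfolding saturated_class_def by blast

lemma A_biprod: "biprod C X Y S \<Longrightarrow> X \<in> A \<Longrightarrow> Y \<in> A \<Longrightarrow> S \<in> A"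
  using satA unfolding saturated_class_def by blast

lemma B_biprod: "biprod C X Y S \<Longrightarrow> X \<in> B \<Longrightarrow> Y \<in> B \<Longrightarrow> S \<in> B"
  using satB unfolding saturated_class_def by blast

lemma A_retract: "S \<in> A \<Longrightarrow> i \<in> Hom C X S \<Longrightarrow> p \<in> Hom C S X \<Longrightarrow> cmp X S X p i = idm C X \<Longrightarrow> X \<in> A"
  using satA unfolding saturated_class_def by blast

lemma B_retract: "S \<in> B \<Longrightarrow> i \<in> Hom C X S \<Longrightarrow> p \<in> Hom C S X \<Longrightarrow> cmp X S X p i = idm C X \<Longrightarrow> X \<in> B"
  using satB unfolding saturated_class_def by blast

lemma A_decomposable:
  assumes "X \<in> A"
  shows "X \<in> decomposable A B"
proof -
  obtain Z where "zero_obj C Z"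
    using zero_obj_ex by blast
  then show ?thesis
    using decomposableI[OF _ assms B_zero id_in id_in zer_in zer_in] by simp
qed

lemma B_decomposable:
  assumes "X \<in> B"
  shows "X \<in> decomposable A B"
proof -
  obtain Z where "zero_obj C Z"
    using zero_obj_ex by blast
  then show ?thesis
    using decomposableI[OF _ A_zero assms zer_in zer_in id_in id_in] by simp
qed

lemma decomposable_zero: "zero_obj C Z \<Longrightarrow> Z \<in> decomposable A B"
  using A_zero A_decomposable by blast

lemma decomposable_retract:
  assumes "S \<in> decomposable A B" and i: "i \<in> Hom C X S" and p: "p \<in> Hom C S X"
    and pi: "cmp X S X p i = idm C X"
  shows "X \<in> decomposable A B"
proof -
  obtain Z1 Z2 a1 b1 a2 b2 where Z: "Z1 \<in> A" "Z2 \<in> B" and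
    m: "b1 \<in> Hom C S Z1" "a1 \<in> Hom C Z1 S" "b2 \<in> Hom C S Z2" "a2 \<in> Hom C Z2 S"
    and sum: "ad S S (cmp S Z1 S a1 b1) (cmp S Z2 S a2 b2) = idm C S"
    using assms(1) by (rule decomposableE)
  have "ad X X (cmp X Z1 X (cmp Z1 S X p a1) (cmp X S Z1 b1 i))
          (cmp X Z2 X (cmp Z2 S X p a2) (cmp X S Z2 b2 i))
        = cmp X S X p (cmp X S S (ad S S (cmp S Z1 S a1 b1) (cmp S Z2 S a2 b2)) i)"
    using m i p by simp
  also have "\<dots> = idm C X"
    using sum i p pi by simp
  finally show ?thesis
    by (rule decomposableI) (use Z m i p in simp_all)
qed

lemma decomposable_iso: "X \<in> decomposable A B \<Longrightarrow> isomorphic C X X' \<Longrightarrow> X' \<in> decomposable A B"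
  unfolding isomorphic_def is_iso_cmp using decomposable_retract by blast

lemma decomposable_summand: "biprod C X Y S \<Longrightarrow> S \<in> decomposable A B \<Longrightarrow> X \<in> decomposable A B"
  unfolding biprod_cmp using decomposable_retract by blast

lemma decomposable_if_split_iso:
  assumes Z: "Z1 \<in> A" "Z2 \<in> B"
    and m: "b1 \<in> Hom C X Z1" "a1 \<in> Hom C Z1 X" "b2 \<in> Hom C X Z2" "a2 \<in> Hom C Z2 X"
    and iso: "is_iso C X X (ad X X (cmp X Z1 X a1 b1) (cmp X Z2 X a2 b2))"
  shows "X \<in> decomposable A B"
proof -
  obtain w where w: "w \<in> Hom C X X"
    "cmp X X X w (ad X X (cmp X Z1 X a1 b1) (cmp X Z2 X a2 b2)) = idm C X"
    using iso by (rule is_iso_left_inverse)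
  then have "ad X X (cmp X Z1 X (cmp Z1 X X w a1) b1) (cmp X Z2 X (cmp Z2 X X w a2) b2) = idm C X"
    using m by simp
  then show ?thesis
    by (rule decomposableI) (use Z m w in simp_all)
qed

lemma decomposable_sh:
  assumes "X \<in> decomposable A B"
  shows "sh C X \<in> decomposable A B"
proof -
  obtain Z1 Z2 a1 b1 a2 b2 where Z: "Z1 \<in> A" "Z2 \<in> B"
    and m: "b1 \<in> Hom C X Z1" "a1 \<in> Hom C Z1 X" "b2 \<in> Hom C X Z2" "a2 \<in> Hom C Z2 X"
    and sum: "ad X X (cmp X Z1 X a1 b1) (cmp X Z2 X a2 b2) = idm C X"
    using assms by (rule decomposableE)
  have "ad (sh C X) (sh C X) (cmp (sh C X) (sh C Z1) (sh C X) (shf Z1 X a1) (shf X Z1 b1))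
          (cmp (sh C X) (sh C Z2) (sh C X) (shf Z2 X a2) (shf X Z2 b2))
        = shf X X (ad X X (cmp X Z1 X a1 b1) (cmp X Z2 X a2 b2))"
    using m by simp
  also have "\<dots> = idm C (sh C X)"
    using sum by simp
  finally show ?thesis
    by (rule decomposableI) (use Z m A_sh B_sh in simp_all)
qed

text \<open>Replace the two witnesses of the decomposition of X[1] by isomorphic suspensions and
  transport the decomposition back along the bijections on Hom-spaces given by the suspension.\<close>

lemma decomposable_unsh:
  assumes "sh C X \<in> decomposable A B"
  shows "X \<in> decomposable A B"
proof -
  obtain Z1 Z2 a1 b1 a2 b2 where Z: "Z1 \<in> A" "Z2 \<in> B"
    and m: "b1 \<in> Hom C (sh C X) Z1" "a1 \<in> Hom C Z1 (sh C X)"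
      "b2 \<in> Hom C (sh C X) Z2" "a2 \<in> Hom C Z2 (sh C X)"
    and sum: "ad (sh C X) (sh C X) (cmp (sh C X) Z1 (sh C X) a1 b1) (cmp (sh C X) Z2 (sh C X) a2 b2)
      = idm C (sh C X)"
    using assms by (rule decomposableE)
  obtain U1 ph1 ps1 where i1: "isomorphic C (sh C U1) Z1" and
    p1: "ph1 \<in> Hom C (sh C U1) Z1" "ps1 \<in> Hom C Z1 (sh C U1)"
      "cmp Z1 (sh C U1) Z1 ph1 ps1 = idm C Z1"
    using sh_ess_surj unfolding isomorphic_def is_iso_cmp by blast
  obtain U2 ph2 ps2 where i2: "isomorphic C (sh C U2) Z2" and
    p2: "ph2 \<in> Hom C (sh C U2) Z2" "ps2 \<in> Hom C Z2 (sh C U2)"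
      "cmp Z2 (sh C U2) Z2 ph2 ps2 = idm C Z2"
    using sh_ess_surj unfolding isomorphic_def is_iso_cmp by blast
  have U: "U1 \<in> A" "U2 \<in> B"
    using A_iso[OF Z(1) isomorphic_sym[OF i1]] B_iso[OF Z(2) isomorphic_sym[OF i2]] A_sh B_sh
    by auto
  obtain be1 where be1: "be1 \<in> Hom C X U1" "cmp (sh C X) Z1 (sh C U1) ps1 b1 = shf X U1 be1"
    using shf_surj[of "cmp (sh C X) Z1 (sh C U1) ps1 b1" X U1] m p1 by auto
  obtain al1 where al1: "al1 \<in> Hom C U1 X" "cmp (sh C U1) Z1 (sh C X) a1 ph1 = shf U1 X al1"
    using shf_surj[of "cmp (sh C U1) Z1 (sh C X) a1 ph1" U1 X] m p1 by auto
  obtain be2 where be2: "be2 \<in> Hom C X U2" "cmp (sh C X) Z2 (sh C U2) ps2 b2 = shf X U2 be2"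
    using shf_surj[of "cmp (sh C X) Z2 (sh C U2) ps2 b2" X U2] m p2 by auto
  obtain al2 where al2: "al2 \<in> Hom C U2 X" "cmp (sh C U2) Z2 (sh C X) a2 ph2 = shf U2 X al2"
    using shf_surj[of "cmp (sh C U2) Z2 (sh C X) a2 ph2" U2 X] m p2 by auto
  have "shf X X (ad X X (cmp X U1 X al1 be1) (cmp X U2 X al2 be2)) = shf X X (idm C X)"
    using m p1 p2 be1 al1 be2 al2 sum
    by (simp flip: be1(2) al1(2) be2(2) al2(2) add: cmp_reassoc[OF p1(3)] cmp_reassoc[OF p2(3)])
  then have "ad X X (cmp X U1 X al1 be1) (cmp X U2 X al2 be2) = idm C X"
    using shf_inj be1 al1 be2 al2 by (meson ad_in cmp_in id_in)
  then show ?thesis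
    by (rule decomposableI) (use U be1 al1 be2 al2 in simp_all)
qed

text \<open>The cone Z of f : X \<rightarrow> Y is compared with the cones C1 \<in> A and C2 \<in> B of the diagonal
  components f1, f2 of f (its off-diagonal components vanish by orthogonality).  The resulting
  endomorphism d1 c1 + d2 c2 of Z fixes g and h, hence is invertible.\<close>

lemma decomposable_cone:
  assumes T: "(X, Y, Z, f, g, h) \<in> dtri C"
    and "X \<in> decomposable A B" and "Y \<in> decomposable A B"
  shows "Z \<in> decomposable A B"
proof -
  obtain X1 X2 ax1 bx1 ax2 bx2 where X12: "X1 \<in> A" "X2 \<in> B"
    and mx: "bx1 \<in> Hom C X X1" "ax1 \<in> Hom C X1 X" "bx2 \<in> Hom C X X2" "ax2 \<in> Hom C X2 X"
    and sx: "ad X X (cmp X X1 X ax1 bx1) (cmp X X2 X ax2 bx2) = idm C X"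
    using assms(2) by (rule decomposableE)
  obtain Y1 Y2 ay1 by1 ay2 by2 where Y12: "Y1 \<in> A" "Y2 \<in> B"
    and my: "by1 \<in> Hom C Y Y1" "ay1 \<in> Hom C Y1 Y" "by2 \<in> Hom C Y Y2" "ay2 \<in> Hom C Y2 Y"
    and sy: "ad Y Y (cmp Y Y1 Y ay1 by1) (cmp Y Y2 Y ay2 by2) = idm C Y"
    using assms(3) by (rule decomposableE)
  have sx': "ad X X (cmp X X2 X ax2 bx2) (cmp X X1 X ax1 bx1) = idm C X"
    and sy': "ad Y Y (cmp Y Y2 Y ay2 by2) (cmp Y Y1 Y ay1 by1) = idm C Y"
    using sx sy mx my by (simp_all add: ad_comm)
  have m: "f \<in> Hom C X Y" "g \<in> Hom C Y Z" "h \<in> Hom C Z (sh C X)"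
    using dtri_in[OF T] by auto
  define f1 where "f1 = cmp X1 Y Y1 by1 (cmp X1 X Y f ax1)"
  define f2 where "f2 = cmp X2 Y Y2 by2 (cmp X2 X Y f ax2)"
  have "f1 \<in> Hom C X1 Y1" "f2 \<in> Hom C X2 Y2"
    unfolding f1_def f2_def using m mx my by simp_all
  then obtain C1 g1 h1 C2 g2 h2 where T1: "(X1, Y1, C1, f1, g1, h1) \<in> dtri C"
    and T2: "(X2, Y2, C2, f2, g2, h2) \<in> dtri C"
    using dtri_ex by metis
  have "\<not> nonzero_hom X2 Y1" "\<not> nonzero_hom X1 Y2"
    using orthAB X12 Y12 by blast+
  then have vanish: "cmp X2 Y Y1 by1 (cmp X2 X Y f ax2) = zer C X2 Y1"
    "cmp X1 Y Y2 by2 (cmp X1 X Y f ax1) = zer C X1 Y2"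
    using hom_eq_zer m mx my by simp_all
  have sq1: "cmp X Y Y1 by1 f = cmp X X1 Y1 f1 bx1" "cmp X1 Y1 Y ay1 f1 = cmp X1 X Y f ax1"
    unfolding f1_def by (rule diagonal_component_squares[OF sx sy mx my m(1) vanish])+
  have sq2: "cmp X Y Y2 by2 f = cmp X X2 Y2 f2 bx2" "cmp X2 Y2 Y ay2 f2 = cmp X2 X Y f ax2"
    unfolding f2_def
    by (rule diagonal_component_squares[OF sx' sy' mx(3,4,1,2) my(3,4,1,2) m(1) vanish(2,1)])+
  obtain c1 d1 where c1: "c1 \<in> Hom C Z C1" "d1 \<in> Hom C C1 Z"
    "cmp Y Z C1 c1 g = cmp Y Y1 C1 g1 by1"
    "cmp Z (sh C X) (sh C X1) (shf X X1 bx1) h = cmp Z C1 (sh C X1) h1 c1"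
    "cmp Y1 C1 Z d1 g1 = cmp Y1 Y Z g ay1"
    "cmp C1 (sh C X1) (sh C X) (shf X1 X ax1) h1 = cmp C1 Z (sh C X) h d1"
    using dtri_mor_pair[OF T T1 mx(1,2) my(1,2) sq1] by blast
  obtain c2 d2 where c2: "c2 \<in> Hom C Z C2" "d2 \<in> Hom C C2 Z"
    "cmp Y Z C2 c2 g = cmp Y Y2 C2 g2 by2"
    "cmp Z (sh C X) (sh C X2) (shf X X2 bx2) h = cmp Z C2 (sh C X2) h2 c2"
    "cmp Y2 C2 Z d2 g2 = cmp Y2 Y Z g ay2"
    "cmp C2 (sh C X2) (sh C X) (shf X2 X ax2) h2 = cmp C2 Z (sh C X) h d2"
    using dtri_mor_pair[OF T T2 mx(3,4) my(3,4) sq2] by blast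
  have m12: "g1 \<in> Hom C Y1 C1" "h1 \<in> Hom C C1 (sh C X1)"
    "g2 \<in> Hom C Y2 C2" "h2 \<in> Hom C C2 (sh C X2)"
    using dtri_in[OF T1] dtri_in[OF T2] by auto
  define u where "u = ad Z Z (cmp Z C1 Z d1 c1) (cmp Z C2 Z d2 c2)"
  have "cmp Y Z Z u g = cmp Y Y Z g (ad Y Y (cmp Y Y1 Y ay1 by1) (cmp Y Y2 Y ay2 by2))"
    unfolding u_def using m my m12 c1(1-3) c2(1-3)
    by (simp add: cmp_reassoc[OF c1(5)] cmp_reassoc[OF c2(5)])
  then have ug: "cmp Y Z Z u g = g"
    using sy m by simp
  have "cmp Z Z (sh C X) h u
        = cmp Z (sh C X) (sh C X) (shf X X (ad X X (cmp X X1 X ax1 bx1) (cmp X X2 X ax2 bx2))) h"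
    unfolding u_def using m mx m12 c1(1,2) c2(1,2)
    by (simp add: c1(4)[symmetric] c2(4)[symmetric] cmp_reassoc[OF c1(6)[symmetric]]
        cmp_reassoc[OF c2(6)[symmetric]])
  then have hu: "cmp Z Z (sh C X) h u = h"
    using sx m by simp
  have "u \<in> Hom C Z Z"
    unfolding u_def using c1(1,2) c2(1,2) by simp
  then show ?thesis
    using decomposable_if_split_iso[OF A_cone[OF T1 X12(1) Y12(1)] B_cone[OF T2 X12(2) Y12(2)]]
      dtri_endo_iso[OF T _ ug hu] c1 c2 unfolding u_def by blast
qed

lemma decomposable_dtri:
  assumes T: "(X, Y, Z, f, g, h) \<in> dtri C"
  shows "X \<in> decomposable A B \<Longrightarrow> Y \<in> decomposable A B \<Longrightarrow> Z \<in> decomposable A B"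
    and "Y \<in> decomposable A B \<Longrightarrow> Z \<in> decomposable A B \<Longrightarrow> X \<in> decomposable A B"
    and "X \<in> decomposable A B \<Longrightarrow> Z \<in> decomposable A B \<Longrightarrow> Y \<in> decomposable A B"
proof -
  note T1 = dtri_rot[OF T]
  note T2 = dtri_rot[OF T1]
  show "X \<in> decomposable A B \<Longrightarrow> Y \<in> decomposable A B \<Longrightarrow> Z \<in> decomposable A B"
    using decomposable_cone[OF T] .
  show "Y \<in> decomposable A B \<Longrightarrow> Z \<in> decomposable A B \<Longrightarrow> X \<in> decomposable A B"
    using decomposable_cone[OF T1] decomposable_unsh by blast
  show "X \<in> decomposable A B \<Longrightarrow> Z \<in> decomposable A B \<Longrightarrow> Y \<in> decomposable A B"
    using decomposable_cone[OF T2] decomposable_sh decomposable_unsh by blast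
qed

lemma decomposable_thick: "thick C (decomposable A B)"
proof -
  let ?D = "decomposable A B"
  have "\<forall>X Y Z f g h. (X, Y, Z, f, g, h) \<in> dtri C \<longrightarrow> (X \<in> ?D \<and> Y \<in> ?D \<longrightarrow> Z \<in> ?D) \<and>
      (Y \<in> ?D \<and> Z \<in> ?D \<longrightarrow> X \<in> ?D) \<and> (X \<in> ?D \<and> Z \<in> ?D \<longrightarrow> Y \<in> ?D)"
    by (meson decomposable_dtri)
  moreover have "\<forall>X. X \<in> ?D \<longleftrightarrow> sh C X \<in> ?D"
    using decomposable_sh decomposable_unsh by blast
  moreover have "\<exists>Z\<in>?D. zero_obj C Z"
    using zero_obj_ex decomposable_zero by blast
  ultimately show ?thesis
    unfolding thick_def using decomposable_iso decomposable_summand by blast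
qed

lemma decomposable_biprod:
  assumes b: "biprod C X Y S" and "X \<in> decomposable A B" and "Y \<in> decomposable A B"
  shows "S \<in> decomposable A B"
proof -
  obtain X1 X2 ax1 bx1 ax2 bx2 where X12: "X1 \<in> A" "X2 \<in> B"
    and mx: "bx1 \<in> Hom C X X1" "ax1 \<in> Hom C X1 X" "bx2 \<in> Hom C X X2" "ax2 \<in> Hom C X2 X"
    and sx: "ad X X (cmp X X1 X ax1 bx1) (cmp X X2 X ax2 bx2) = idm C X"
    using assms(2) by (rule decomposableE)
  obtain Y1 Y2 ay1 by1 ay2 by2 where Y12: "Y1 \<in> A" "Y2 \<in> B"
    and my: "by1 \<in> Hom C Y Y1" "ay1 \<in> Hom C Y1 Y" "by2 \<in> Hom C Y Y2" "ay2 \<in> Hom C Y2 Y"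
    and sy: "ad Y Y (cmp Y Y1 Y ay1 by1) (cmp Y Y2 Y ay2 by2) = idm C Y"
    using assms(3) by (rule decomposableE)
  obtain iX iY pX pY where bs: "iX \<in> Hom C X S" "iY \<in> Hom C Y S" "pX \<in> Hom C S X" "pY \<in> Hom C S Y"
    and ss: "ad S S (cmp S X S iX pX) (cmp S Y S iY pY) = idm C S"
    using b unfolding biprod_cmp by blast
  obtain Z1 Z2 where z1: "biprod C X1 Y1 Z1" and z2: "biprod C X2 Y2 Z2"
    using biprod_ex by metis
  obtain k k' q q' where
    bz1: "k \<in> Hom C X1 Z1" "k' \<in> Hom C Y1 Z1" "q \<in> Hom C Z1 X1" "q' \<in> Hom C Z1 Y1"
    "cmp X1 Z1 X1 q k = idm C X1" "cmp Y1 Z1 Y1 q' k' = idm C Y1"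
    "cmp Y1 Z1 X1 q k' = zer C Y1 X1" "cmp X1 Z1 Y1 q' k = zer C X1 Y1"
    using z1 unfolding biprod_cmp by blast
  obtain l l' t t' where
    bz2: "l \<in> Hom C X2 Z2" "l' \<in> Hom C Y2 Z2" "t \<in> Hom C Z2 X2" "t' \<in> Hom C Z2 Y2"
    "cmp X2 Z2 X2 t l = idm C X2" "cmp Y2 Z2 Y2 t' l' = idm C Y2"
    "cmp Y2 Z2 X2 t l' = zer C Y2 X2" "cmp X2 Z2 Y2 t' l = zer C X2 Y2"
    using z2 unfolding biprod_cmp by blast
  let ?b1 = "ad S Z1 (cmp S X Z1 (cmp X X1 Z1 k bx1) pX) (cmp S Y Z1 (cmp Y Y1 Z1 k' by1) pY)"
  let ?a1 = "ad Z1 S (cmp Z1 X S iX (cmp Z1 X1 X ax1 q)) (cmp Z1 Y S iY (cmp Z1 Y1 Y ay1 q'))"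
  let ?b2 = "ad S Z2 (cmp S X Z2 (cmp X X2 Z2 l bx2) pX) (cmp S Y Z2 (cmp Y Y2 Z2 l' by2) pY)"
  let ?a2 = "ad Z2 S (cmp Z2 X S iX (cmp Z2 X2 X ax2 t)) (cmp Z2 Y S iY (cmp Z2 Y2 Y ay2 t'))"
  have "ad S S (cmp S Z1 S ?a1 ?b1) (cmp S Z2 S ?a2 ?b2) =
     ad S S (cmp S X S iX (cmp S X X (ad X X (cmp X X1 X ax1 bx1) (cmp X X2 X ax2 bx2)) pX))
            (cmp S Y S iY (cmp S Y Y (ad Y Y (cmp Y Y1 Y ay1 by1) (cmp Y Y2 Y ay2 by2)) pY))"
    using mx my bs bz1(1-4) bz2(1-4)
    by (simp add: cmp_reassoc[OF bz1(5)] cmp_reassoc[OF bz1(6)] cmp_reassoc[OF bz1(7)]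
        cmp_reassoc[OF bz1(8)] cmp_reassoc[OF bz2(5)] cmp_reassoc[OF bz2(6)] cmp_reassoc[OF bz2(7)]
        cmp_reassoc[OF bz2(8)] ad_comm ad_lcomm)
  also have "\<dots> = idm C S"
    unfolding sx sy using bs ss by simp
  finally show ?thesis
    by (rule decomposableI)
      (use A_biprod[OF z1 X12(1) Y12(1)] B_biprod[OF z2 X12(2) Y12(2)] mx my bs bz1(1-4) bz2(1-4)
        in simp_all)
qed

lemma dsum_decomposable:
  "dsum C Ws S \<Longrightarrow> (\<forall>W\<in>set Ws. W \<in> decomposable A B) \<Longrightarrow> S \<in> decomposable A B"
proof (induction rule: dsum.induct)
  case (dsum_Nil Z)
  then show ?case
    using decomposable_zero by blast
next
  case (dsum_Cons Xs S' X S)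
  then show ?case
    using decomposable_biprod by simp
qed

lemma local_decomposable_cases:
  assumes "local_end C X" and "X \<in> decomposable A B"
  shows "X \<in> A \<or> X \<in> B"
proof -
  obtain Z1 Z2 a1 b1 a2 b2 where Z: "Z1 \<in> A" "Z2 \<in> B"
    and m: "b1 \<in> Hom C X Z1" "a1 \<in> Hom C Z1 X" "b2 \<in> Hom C X Z2" "a2 \<in> Hom C Z2 X"
    and sum: "ad X X (cmp X Z1 X a1 b1) (cmp X Z2 X a2 b2) = idm C X"
    using assms(2) by (rule decomposableE)
  from local_end_sum_iso[OF assms(1) _ _ sum] m
  consider "is_iso C X X (cmp X Z1 X a1 b1)" | "is_iso C X X (cmp X Z2 X a2 b2)"
    by auto
  then show ?thesis
  proof cases
    case 1
    then obtain w where "w \<in> Hom C X X" "cmp X X X w (cmp X Z1 X a1 b1) = idm C X"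
      by (rule is_iso_left_inverse)
    then show ?thesis
      using A_retract[OF Z(1) m(1), of "cmp Z1 X X w a1"] m by simp
  next
    case 2
    then obtain w where "w \<in> Hom C X X" "cmp X X X w (cmp X Z2 X a2 b2) = idm C X"
      by (rule is_iso_left_inverse)
    then show ?thesis
      using B_retract[OF Z(2) m(3), of "cmp Z2 X X w a2"] m by simp
  qed
qed

lemma indec_in_A_or_B:
  assumes KS: "krull_schmidt C" and G: "classical_generator C G"
    and summands: "\<And>W W'. local_end C W \<Longrightarrow> biprod C W W' G \<Longrightarrow> W \<in> A \<or> W \<in> B"
    and X: "indec C X"
  shows "X \<in> A \<or> X \<in> B"
proof -
  obtain Ws where Ws: "dsum C Ws G" "\<forall>W\<in>set Ws. local_end C W"
    using KS unfolding krull_schmidt_def by blast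
  then have "\<forall>W\<in>set Ws. W \<in> decomposable A B"
    using dsum_member summands A_decomposable B_decomposable by blast
  then have "G \<in> decomposable A B"
    using dsum_decomposable Ws(1) by blast
  then have "thick_closure C G \<subseteq> decomposable A B"
    unfolding thick_closure_def using decomposable_thick by blast
  then have "Y \<in> decomposable A B" for Y
    using G unfolding classical_generator_def by blast
  moreover obtain L where "local_end C L" "isomorphic C L X"
    using indec_local_iso[OF KS X] by blast
  ultimately show ?thesis
    using local_decomposable_cases A_iso B_iso by blast
qed

end

section \<open>Ext-connectedness of the indecomposable summands\<close>

definition add1_indec :: "'o \<Rightarrow> 'o set" where
  "add1_indec G = {X. indec C X \<and> in_add1 C G X}"

definition ext_adjacent :: "'o \<Rightarrow> 'o \<Rightarrow> 'o \<Rightarrow> bool" where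
  "ext_adjacent G X Y \<longleftrightarrow>
     X \<in> add1_indec G \<and> Y \<in> add1_indec G \<and> (ext1_nonzero C X Y \<or> ext1_nonzero C Y X)"

definition ext_connected :: "'o \<Rightarrow> 'o \<Rightarrow> 'o \<Rightarrow> bool" where
  "ext_connected G = (ext_adjacent G)\<^sup>*\<^sup>*"

lemma ext1_nonzero_iff: "ext1_nonzero C X Y \<longleftrightarrow> nonzero_hom X (sh C Y)"
  unfolding ext1_nonzero_def nonzero_hom_def ..

lemma add1_indec_sh: "X \<in> add1_indec G \<Longrightarrow> sh C X \<in> add1_indec G"
  unfolding add1_indec_def using indec_sh in_add1_sh by blast

lemma add1_indec_iso: "X \<in> add1_indec G \<Longrightarrow> isomorphic C X Y \<Longrightarrow> Y \<in> add1_indec G"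
  unfolding add1_indec_def using indec_iso in_add1_iso by blast

lemma ext_connected_sym: "ext_connected G X Y \<Longrightarrow> ext_connected G Y X"
  unfolding ext_connected_def
proof (induction rule: rtranclp_induct)
  case (step y z)
  moreover have "ext_adjacent G z y"
    using step(2) unfolding ext_adjacent_def by blast
  ultimately show ?case
    by (metis converse_rtranclp_into_rtranclp)
qed simp

lemma ext_connected_trans: "ext_connected G X Y \<Longrightarrow> ext_connected G Y Z \<Longrightarrow> ext_connected G X Z"
  unfolding ext_connected_def by (rule rtranclp_trans)

text \<open>Ext^1(X[1], X) = Hom(X[1], X[1]) contains the identity, which is nonzero for an
  indecomposable object.\<close>

lemma ext_connected_sh:
  assumes X: "X \<in> add1_indec G"
  shows "ext_connected G X (sh C X)"
proof -
  have "indec C (sh C X)"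
    using add1_indec_sh[OF X] unfolding add1_indec_def by blast
  then have "ext1_nonzero C (sh C X) X"
    unfolding ext1_nonzero_iff indec_def using zero_obj_iff_no_endo by blast
  then have "ext_adjacent G X (sh C X)"
    using X add1_indec_sh[OF X] unfolding ext_adjacent_def by blast
  then show ?thesis
    unfolding ext_connected_def by blast
qed

lemma ext_connected_iso:
  assumes X: "X \<in> add1_indec G" and XY: "isomorphic C X Y"
  shows "ext_connected G X Y"
proof -
  have "indec C (sh C X)"
    using add1_indec_sh[OF X] unfolding add1_indec_def by blast
  then have "nonzero_hom (sh C X) (sh C X)"
    unfolding indec_def using zero_obj_iff_no_endo by blast
  then have "ext1_nonzero C (sh C X) Y"
    unfolding ext1_nonzero_iff using nonzero_hom_iso isomorphic_refl isomorphic_sh[OF XY] by blast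
  then have "ext_adjacent G (sh C X) Y"
    using add1_indec_sh[OF X] add1_indec_iso[OF X XY] unfolding ext_adjacent_def by blast
  then show ?thesis
    using ext_connected_sh[OF X] ext_connected_trans unfolding ext_connected_def by blast
qed

lemma ext_connected_chain:
  assumes "ext_connected G F F'" and "F \<in> add1_indec G"
  shows "\<exists>Fs. Fs \<noteq> [] \<and> hd Fs = F \<and> last Fs = F' \<and> set Fs \<subseteq> add1_indec G \<and>
    successively (ext_adjacent G) Fs"
  using assms unfolding ext_connected_def
proof (induction rule: rtranclp_induct)
  case base
  then show ?case
    by (intro exI[of _ "[F]"]) auto
next
  case (step y z)
  then obtain Fs where "Fs \<noteq> []" "hd Fs = F" "last Fs = y" "set Fs \<subseteq> add1_indec G"
    "successively (ext_adjacent G) Fs"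
    by blast
  with step(2) show ?case
    by (intro exI[of _ "Fs @ [z]"]) (auto simp: successively_append_iff ext_adjacent_def)
qed

lemma homologically_connected_if_ext_connected:
  assumes "\<And>F F'. F \<in> add1_indec G \<Longrightarrow> F' \<in> add1_indec G \<Longrightarrow> ext_connected G F F'"
  shows "homologically_connected C G"
  unfolding homologically_connected_def
proof (intro allI impI)
  fix F F' assume "indec C F" "in_add1 C G F" "indec C F'" "in_add1 C G F'"
  then have "F \<in> add1_indec G" "F' \<in> add1_indec G"
    unfolding add1_indec_def by blast+
  then obtain Fs where "Fs \<noteq> []" "hd Fs = F" "last Fs = F'" "set Fs \<subseteq> add1_indec G"
    "successively (ext_adjacent G) Fs"
    using ext_connected_chain assms by blast
  then show "\<exists>Fs. Fs \<noteq> [] \<and> hd Fs = F \<and> last Fs = F' \<and> (\<forall>X\<in>set Fs. indec C X \<and> in_add1 C G X) \<and>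
      (\<forall>i. Suc i < length Fs \<longrightarrow>
        ext1_nonzero C (Fs ! i) (Fs ! Suc i) \<or> ext1_nonzero C (Fs ! Suc i) (Fs ! i))"
    unfolding successively_conv_nth ext_adjacent_def add1_indec_def by blast
qed

lemma ext_component_orth:
  assumes p: "p \<in> add1_indec G" "ext_connected G F p"
    and q: "q \<in> add1_indec G" "\<not> ext_connected G F q"
  shows "\<not> nonzero_hom p q \<and> \<not> nonzero_hom q p"
proof (intro conjI notI)
  assume "nonzero_hom p q"
  then have "ext_adjacent G (sh C p) q"
    using add1_indec_sh[OF p(1)] q(1) nonzero_hom_sh unfolding ext_adjacent_def ext1_nonzero_iff
    by blast
  then show False
    using q(2) ext_connected_trans[OF p(2) ext_connected_sh[OF p(1)]]
    unfolding ext_connected_def by (meson rtranclp.rtrancl_into_rtrancl)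
next
  assume "nonzero_hom q p"
  then have "ext_adjacent G (sh C q) p"
    using add1_indec_sh[OF q(1)] p(1) nonzero_hom_sh unfolding ext_adjacent_def ext1_nonzero_iff
    by blast
  then have "ext_connected G q p"
    using ext_connected_sh[OF q(1)] ext_connected_trans unfolding ext_connected_def
    by (meson rtranclp.rtrancl_into_rtrancl)
  then show False
    using q(2) p(2) ext_connected_sym ext_connected_trans by blast
qed

lemma funpow_sh: "(sh C ^^ i) (sh C X) = sh C ((sh C ^^ i) X)"
  by (simp add: funpow_swap1)

lemma nonzero_hom_funpow_sh: "nonzero_hom ((sh C ^^ i) X) ((sh C ^^ i) Y) \<longleftrightarrow> nonzero_hom X Y"
  by (induction i) (simp_all add: nonzero_hom_sh)

lemma isomorphic_funpow_sh: "isomorphic C X Y \<Longrightarrow> isomorphic C ((sh C ^^ i) X) ((sh C ^^ i) Y)"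
  by (induction i) (simp_all add: isomorphic_sh)

definition sh_saturation :: "'o set \<Rightarrow> 'o set" where
  "sh_saturation Q = {q. \<exists>i. (sh C ^^ i) q \<in> Q}"

lemma funpow_sh_closed: "(\<And>X. X \<in> Q \<Longrightarrow> sh C X \<in> Q) \<Longrightarrow> X \<in> Q \<Longrightarrow> (sh C ^^ i) X \<in> Q"
  by (induction i) simp_all

lemma shift_stable_sh_saturation:
  assumes sh: "\<And>X. X \<in> Q \<Longrightarrow> sh C X \<in> Q"
    and iso: "\<And>X X'. X \<in> Q \<Longrightarrow> isomorphic C X X' \<Longrightarrow> X' \<in> Q"
  shows "shift_stable (sh_saturation Q)"
  unfolding shift_stable_def
proof (intro conjI ballI)
  fix Y assume "Y \<in> sh_saturation Q"
  then obtain i where "(sh C ^^ i) Y \<in> Q"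
    unfolding sh_saturation_def by blast
  then have "(sh C ^^ i) (sh C Y) \<in> Q"
    using sh by (simp add: funpow_sh)
  then show "sh C Y \<in> sh_saturation Q"
    unfolding sh_saturation_def by blast
  obtain Y' where Y': "isomorphic C (sh C Y') Y"
    using sh_ess_surj by blast
  then have "(sh C ^^ Suc i) Y' \<in> Q"
    using iso[OF \<open>(sh C ^^ i) Y \<in> Q\<close>] isomorphic_funpow_sh[OF Y', of i] isomorphic_sym
    by (simp add: funpow_Suc_right del: funpow.simps)
  then show "\<exists>Y'\<in>sh_saturation Q. isomorphic C (sh C Y') Y"
    using Y' unfolding sh_saturation_def by blast
qed

lemma subset_orth_sh_saturation:
  assumes sh: "\<And>X. X \<in> P \<Longrightarrow> sh C X \<in> P"
    and orthPQ: "\<And>p q. p \<in> P \<Longrightarrow> q \<in> Q \<Longrightarrow> \<not> nonzero_hom p q \<and> \<not> nonzero_hom q p"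
  shows "P \<subseteq> orth (sh_saturation Q)"
proof
  fix p assume p: "p \<in> P"
  have "\<not> nonzero_hom p q \<and> \<not> nonzero_hom q p" if "(sh C ^^ i) q \<in> Q" for q i
    using orthPQ[OF funpow_sh_closed[of P, OF sh p] that] nonzero_hom_funpow_sh by blast
  then show "p \<in> orth (sh_saturation Q)"
    unfolding orth_def sh_saturation_def by blast
qed

lemma shift_stable_ext_complement:
  "shift_stable (sh_saturation {X \<in> add1_indec G. \<not> ext_connected G F X})"
proof (rule shift_stable_sh_saturation)
  show "sh C X \<in> {X \<in> add1_indec G. \<not> ext_connected G F X}"
    if "X \<in> {X \<in> add1_indec G. \<not> ext_connected G F X}" for X
    using that add1_indec_sh ext_connected_trans ext_connected_sym ext_connected_sh by blast
  show "X' \<in> {X \<in> add1_indec G. \<not> ext_connected G F X}"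
    if "X \<in> {X \<in> add1_indec G. \<not> ext_connected G F X}" "isomorphic C X X'" for X X'
    using that add1_indec_iso ext_connected_trans ext_connected_sym ext_connected_iso by blast
qed

lemma ext_component_subset_orth:
  "{X \<in> add1_indec G. ext_connected G F X}
     \<subseteq> orth (sh_saturation {X \<in> add1_indec G. \<not> ext_connected G F X})"
proof (rule subset_orth_sh_saturation)
  show "sh C X \<in> {X \<in> add1_indec G. ext_connected G F X}"
    if "X \<in> {X \<in> add1_indec G. ext_connected G F X}" for X
    using that add1_indec_sh ext_connected_trans ext_connected_sh by blast
  show "\<not> nonzero_hom p q \<and> \<not> nonzero_hom q p"
    if "p \<in> {X \<in> add1_indec G. ext_connected G F X}"
      "q \<in> {X \<in> add1_indec G. \<not> ext_connected G F X}" for p q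
    using that ext_component_orth by blast
qed

text \<open>If F and F' lie in different Ext-components, the Ext-component of F is Hom-orthogonal to
  all suspensions of the remaining indecomposable summands; Hom-orthogonality to that set and
  then to its orthogonal gives two saturated classes separating F from F'.\<close>

lemma ext_components_split:
  assumes KS: "krull_schmidt C" and G: "classical_generator C G"
    and F: "F \<in> add1_indec G" and F': "F' \<in> add1_indec G"
    and disconnected: "\<not> ext_connected G F F'"
  obtains A B where "\<And>X. indec C X \<Longrightarrow> X \<in> A \<or> X \<in> B"
    "\<forall>X\<in>A. \<forall>Y\<in>B. \<not> nonzero_hom X Y \<and> \<not> nonzero_hom Y X"
    "\<And>X X'. X \<in> A \<Longrightarrow> isomorphic C X X' \<Longrightarrow> X' \<in> A" "F \<in> A" "F' \<in> B"
proof -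
  define P where "P = {X \<in> add1_indec G. ext_connected G F X}"
  define Q where "Q = {X \<in> add1_indec G. \<not> ext_connected G F X}"
  define A where "A = orth (sh_saturation Q)"
  define B where "B = orth A"
  have satA: "saturated_class A" and satB: "saturated_class B"
    unfolding A_def B_def Q_def
    using orth_saturated_class orth_shift_stable shift_stable_ext_complement by blast+
  have orthAB: "\<forall>X\<in>A. \<forall>Y\<in>B. \<not> nonzero_hom X Y \<and> \<not> nonzero_hom Y X"
    unfolding B_def orth_def by blast
  have PA: "P \<subseteq> A"
    unfolding P_def A_def Q_def by (rule ext_component_subset_orth)
  have "Q \<subseteq> sh_saturation Q"
    unfolding sh_saturation_def by (metis (mono_tags, lifting) funpow_0 mem_Collect_eq subsetI)
  then have QB: "Q \<subseteq> B"
    unfolding B_def A_def orth_def by blast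
  have cover: "X \<in> A \<or> X \<in> B" if "indec C X" for X
  proof (rule indec_in_A_or_B[OF satA satB orthAB KS G _ that])
    fix W W' assume "local_end C W" "biprod C W W' G"
    then have "W \<in> add1_indec G"
      unfolding add1_indec_def using local_indec in_add1_summand by blast
    then show "W \<in> A \<or> W \<in> B"
      using PA QB unfolding P_def Q_def by blast
  qed
  have isoA: "X' \<in> A" if "X \<in> A" "isomorphic C X X'" for X X'
    using that orth_iso unfolding A_def by blast
  have "F \<in> P" "F' \<in> Q"
    using F F' disconnected unfolding P_def Q_def ext_connected_def by simp_all
  then have "F \<in> A" "F' \<in> B"
    using PA QB by blast+
  with cover orthAB isoA show ?thesis
    by (rule that)
qed

section \<open>Indecomposables of the Paquette--Yildirim category\<close>

lemma PY_arc_of_indec: "PY_category M C arc_of \<Longrightarrow> indec C X \<Longrightarrow> is_arc M (arc_of X)"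
  unfolding PY_category_def by blast

lemma PY_indec_of_arc: "PY_category M C arc_of \<Longrightarrow> is_arc M L \<Longrightarrow> \<exists>X. indec C X \<and> arc_of X = L"
  unfolding PY_category_def by blast

lemma PY_isomorphic_of_arc_eq:
  "PY_category M C arc_of \<Longrightarrow> indec C X \<Longrightarrow> indec C Y \<Longrightarrow> arc_of X = arc_of Y \<Longrightarrow>
   isomorphic C X Y"
  unfolding PY_category_def by blast

lemma PY_nonzero_hom:
  assumes "PY_category M C arc_of" and "indec C X" "indec C Y"
    and "hom_cond M (arc_of X) (arc_unshift M (arc_of Y))"
  shows "nonzero_hom X Y"
proof -
  have "hom_one_dim C X Y"
    using assms unfolding PY_category_def by metis
  then show ?thesis
    unfolding hom_one_dim_def nonzero_hom_def by blast
qed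

text \<open>The arcs of the indecomposables in A are closed under linking, so by connectivity of the
  arc graph they include the arc of Y \<in> B; then Y is isomorphic to an object of A and is
  orthogonal to itself.\<close>

lemma PY_indec_no_orth_split:
  assumes n: "n \<ge> 1" and marked: "PY_marked M n" and PY: "PY_category M C arc_of"
    and cover: "\<And>X. indec C X \<Longrightarrow> X \<in> A \<or> X \<in> B"
    and orthAB: "\<forall>X\<in>A. \<forall>Y\<in>B. \<not> nonzero_hom X Y \<and> \<not> nonzero_hom Y X"
    and isoA: "\<And>X X'. X \<in> A \<Longrightarrow> isomorphic C X X' \<Longrightarrow> X' \<in> A"
    and XY: "X \<in> A" "Y \<in> B" and indec: "indec C X" "indec C Y"
  shows False
proof -
  define S where "S = arc_of ` {X \<in> A. indec C X}"
  have closed: "L' \<in> S" if "is_arc M L'" "arcs_linked M L L'" "L \<in> S" for L L'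
  proof -
    obtain X' where X': "indec C X'" "X' \<in> A" "arc_of X' = L"
      using \<open>L \<in> S\<close> unfolding S_def by blast
    obtain Y' where Y': "indec C Y'" "arc_of Y' = L'"
      using PY_indec_of_arc[OF PY \<open>is_arc M L'\<close>] by blast
    have "nonzero_hom X' Y' \<or> nonzero_hom Y' X'"
      using \<open>arcs_linked M L L'\<close> PY_nonzero_hom[OF PY] X' Y' unfolding arcs_linked_def by blast
    then have "Y' \<in> A"
      using cover[OF Y'(1)] orthAB X'(2) by blast
    then show ?thesis
      unfolding S_def using Y' by blast
  qed
  have "arc_of Y \<in> S"
  proof (rule arc_graph_connected[OF marked n _ PY_arc_of_indec[OF PY indec(1)]
        PY_arc_of_indec[OF PY indec(2)]])
    show "arc_of X \<in> S"
      unfolding S_def using XY(1) indec(1) by blast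
  qed (rule closed)
  then obtain X' where "indec C X'" "X' \<in> A" "arc_of X' = arc_of Y"
    unfolding S_def by blast
  then have "Y \<in> A"
    using isoA PY_isomorphic_of_arc_eq[OF PY _ indec(2)] by blast
  then have "zero_obj C Y"
    using orthAB XY(2) zero_obj_iff_no_endo by blast
  then show False
    using indec(2) unfolding indec_def by blast
qed

end

theorem proposition5p1:
  fixes M :: "complex set" and n :: nat
    and C :: "('o, 'm, 'k::field) tricat" and arc_of :: "'o \<Rightarrow> complex set" and G :: 'o
  assumes "n \<ge> 1"
    and "PY_marked M n"
    and "PY_category M C arc_of"
    and "classical_generator C G"
  shows "homologically_connected C G"
proof -
  have "klinear_additive C" "triangulated C" and KS: "krull_schmidt C"
    using assms(3) unfolding PY_category_def by blast+
  then interpret klinear_triangulated C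
    by unfold_locales
  show ?thesis
  proof (rule homologically_connected_if_ext_connected, rule ccontr)
    fix F F' assume F: "F \<in> add1_indec G" "F' \<in> add1_indec G" and nc: "\<not> ext_connected G F F'"
    obtain A B where "\<And>X. indec C X \<Longrightarrow> X \<in> A \<or> X \<in> B"
      "\<forall>X\<in>A. \<forall>Y\<in>B. \<not> nonzero_hom X Y \<and> \<not> nonzero_hom Y X"
      "\<And>X X'. X \<in> A \<Longrightarrow> isomorphic C X X' \<Longrightarrow> X' \<in> A" "F \<in> A" "F' \<in> B"
      using ext_components_split[OF KS assms(4) F nc] by blast
    moreover have "indec C F" "indec C F'"
      using F unfolding add1_indec_def by blast+
    ultimately show False
      by (rule PY_indec_no_orth_split[OF assms(1-3)])
  qed
qed

end
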